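(* Let $1<p<q<\infty$ and $\alpha>0$. Let $\psi(t)=t^{\frac1p-\frac1q}(1-\log t)^{-\frac{\alpha}{p}}$, $t\in(0,1)$ (a strictly increasing bijection of $(0,1)$ onto itself), and let $\varphi$ be its inverse, so $t=\varphi(t)^{\frac1p-\frac1q}(1-\log\varphi(t))^{-\frac{\alpha}{p}}$. Then, with constants independent of $f$ and $t$, for all $f\in L^{p),\alpha}(\Omega)+L^q(\Omega)$ and all $t\in(0,1)$, $$K\bigl(f,t;L^{p),\alpha},L^q\bigr)\approx\sup_{0<s<\varphi(t)}(1-\log s)^{-\frac{\alpha}{p}}\Bigl(\int_s^{\varphi(t)}f_*^p(x)\,dx\Bigr)^{1/p}+t\Bigl(\int_{\varphi(t)}^1 f_*^q(s)\,ds\Bigr)^{1/q}.$$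
   Context: $\Omega\subset\mathbb R^n$ is a bounded open set with $|\Omega|=1$; $f_*$ is the decreasing rearrangement of $|f|$ on $(0,1)$; $\log$ is the natural logarithm. Grand Lebesgue space: $L^{p),\alpha}(\Omega)$ is the set of measurable $f$ with $\|f\|_{p),\alpha}=\sup_{0<t<1}(1-\log t)^{-\alpha/p}(\int_t^1 f_*^p)^{1/p}<\infty$. K-functional: $K(g,t;X_0,X_1)=\inf_{g=g_0+g_1}(\|g_0\|_{X_0}+t\|g_1\|_{X_1})$. $A\approx B$ means $c^{-1}B\le A\le cB$ with $c$ independent of the indicated variables. *)

theory Defs
  imports "HOL-Analysis.Analysis"
begin

definition meas_on :: "'a::euclidean_space set \<Rightarrow> ('a \<Rightarrow> real) \<Rightarrow> bool" where
  "meas_on \<Omega> f \<longleftrightarrow> set_borel_measurable lebesgue \<Omega> f"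

definition rearr :: "'a::euclidean_space set \<Rightarrow> ('a \<Rightarrow> real) \<Rightarrow> real \<Rightarrow> real" where
  "rearr \<Omega> f t = Inf {y. 0 \<le> y \<and> emeasure lebesgue {x\<in>\<Omega>. y < \<bar>f x\<bar>} \<le> ennreal t}"

definition gl_fun :: "'a::euclidean_space set \<Rightarrow> real \<Rightarrow> real \<Rightarrow> ('a \<Rightarrow> real) \<Rightarrow> real \<Rightarrow> real" where
  "gl_fun \<Omega> p \<alpha> f t = (1 - ln t) powr (- \<alpha> / p) *
     (LINT x:{t..1}|lborel. rearr \<Omega> f x powr p) powr (1 / p)"

definition gl_norm :: "'a::euclidean_space set \<Rightarrow> real \<Rightarrow> real \<Rightarrow> ('a \<Rightarrow> real) \<Rightarrow> real" where
  "gl_norm \<Omega> p \<alpha> f = (SUP t\<in>{0<..<1}. gl_fun \<Omega> p \<alpha> f t)"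

definition GL :: "'a::euclidean_space set \<Rightarrow> real \<Rightarrow> real \<Rightarrow> ('a \<Rightarrow> real) set" where
  "GL \<Omega> p \<alpha> = {f. meas_on \<Omega> f \<and> bdd_above (gl_fun \<Omega> p \<alpha> f ` {0<..<1})}"

definition Lq :: "'a::euclidean_space set \<Rightarrow> real \<Rightarrow> ('a \<Rightarrow> real) set" where
  "Lq \<Omega> q = {f. meas_on \<Omega> f \<and> set_integrable lebesgue \<Omega> (\<lambda>x. \<bar>f x\<bar> powr q)}"

definition Lq_norm :: "'a::euclidean_space set \<Rightarrow> real \<Rightarrow> ('a \<Rightarrow> real) \<Rightarrow> real" where
  "Lq_norm \<Omega> q f = (LINT x:\<Omega>|lebesgue. \<bar>f x\<bar> powr q) powr (1 / q)"

definition decomps :: "'a::euclidean_space set \<Rightarrow> real \<Rightarrow> real \<Rightarrow> real \<Rightarrow> ('a \<Rightarrow> real)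
     \<Rightarrow> (('a \<Rightarrow> real) \<times> ('a \<Rightarrow> real)) set" where
  "decomps \<Omega> p \<alpha> q f = {(g0, g1). g0 \<in> GL \<Omega> p \<alpha> \<and> g1 \<in> Lq \<Omega> q \<and> (\<forall>x\<in>\<Omega>. f x = g0 x + g1 x)}"

definition GL_plus_Lq :: "'a::euclidean_space set \<Rightarrow> real \<Rightarrow> real \<Rightarrow> real \<Rightarrow> ('a \<Rightarrow> real) set" where
  "GL_plus_Lq \<Omega> p \<alpha> q = {f. decomps \<Omega> p \<alpha> q f \<noteq> {}}"

definition Kfun :: "'a::euclidean_space set \<Rightarrow> real \<Rightarrow> real \<Rightarrow> real \<Rightarrow> ('a \<Rightarrow> real) \<Rightarrow> real \<Rightarrow> real" where
  "Kfun \<Omega> p \<alpha> q f t = (INF g\<in>decomps \<Omega> p \<alpha> q f. gl_norm \<Omega> p \<alpha> (fst g) + t * Lq_norm \<Omega> q (snd g))"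

definition psi :: "real \<Rightarrow> real \<Rightarrow> real \<Rightarrow> real \<Rightarrow> real" where
  "psi p q \<alpha> t = t powr (1/p - 1/q) * (1 - ln t) powr (- \<alpha> / p)"

definition phi :: "real \<Rightarrow> real \<Rightarrow> real \<Rightarrow> real \<Rightarrow> real" where
  "phi p q \<alpha> t = (THE s. s \<in> {0<..<1} \<and> psi p q \<alpha> s = t)"

end

theory Submission
  imports Defs
begin

text \<open>
  Write \<open>v = phi t\<close>, so that \<open>t = psi v\<close>. For the lower bound take any splitting
  \<open>f = g0 + g1\<close>: then \<open>f\<^sub>*(x) \<le> g0\<^sub>*(x/2) + g1\<^sub>*(x/2)\<close>, and Chebyshev's inequality gives
  \<open>g1\<^sub>*(x) \<le> x powr (-1/q) * \<parallel>g1\<parallel>\<^sub>q\<close>. Integrating \<open>f\<^sub>* powr p\<close> over \<open>[s, v]\<close> bounds the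
  supremum part by \<open>\<parallel>g0\<parallel> + t \<parallel>g1\<parallel>\<^sub>q\<close>. On \<open>[v, 1]\<close> one writes
  \<open>g0\<^sub>* powr q \<le> g0\<^sub>*(v/2) powr (q-p) * g0\<^sub>* powr p\<close> and uses that \<open>v * g0\<^sub>*(v/2) powr p\<close> is at most a
  multiple of \<open>\<parallel>g0\<parallel> powr p * (1 - ln v) powr \<alpha>\<close>; the definition of \<open>psi\<close> makes the resulting
  powers of \<open>v\<close> and of \<open>1 - ln v\<close> cancel against \<open>t powr q\<close>.

  For the upper bound, truncate \<open>f\<close> at the height \<open>f\<^sub>*(v)\<close>. The truncation lies in \<open>L\<^sup>q\<close>, with
  \<open>q\<close>-th power of its norm at most \<open>v * f\<^sub>*(v) powr q + \<integral>\<^sub>v\<^sup>1 f\<^sub>* powr q\<close>; the excess has a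
  rearrangement that is dominated by \<open>f\<^sub>*\<close> and vanishes on \<open>[v, 1]\<close>, so its grand Lebesgue norm
  is at most the supremum part. The leftover term \<open>t * v powr (1/q) * f\<^sub>*(v)\<close> is controlled
  by the supremum part evaluated at \<open>s = v/2\<close>.
\<close>

lemma one_minus_ln_pos: "0 < x \<Longrightarrow> x \<le> 1 \<Longrightarrow> 0 < 1 - ln (x::real)"
  by (smt (verit) ln_le_zero_iff)

lemma one_minus_ln_divide_le:
  fixes s c :: real
  assumes "0 < s" "s \<le> 1" "1 \<le> c"
  shows "1 - ln (s / c) \<le> (1 + ln c) * (1 - ln s)"
proof -
  have "ln c * ln s \<le> 0" using assms by (intro mult_nonneg_nonpos) simp_all
  moreover have "1 - ln (s / c) = (1 - ln s) + ln c" using assms by (simp add: ln_div)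
  moreover have "(1 + ln c) * (1 - ln s) = (1 - ln s) + ln c - ln c * ln s" by algebra
  ultimately show ?thesis by linarith
qed

lemma powr_add_le_two_powr:
  fixes a b p :: real
  assumes "0 \<le> a" "0 \<le> b" "0 \<le> p"
  shows "(a + b) powr p \<le> 2 powr p * (a powr p + b powr p)"
proof -
  have "(a + b) powr p \<le> (2 * max a b) powr p" using assms by (intro powr_mono2) auto
  also have "\<dots> = 2 powr p * max a b powr p" by (simp add: powr_mult)
  also have "max a b powr p \<le> a powr p + b powr p" using assms by (auto simp: max_def)
  finally show ?thesis by simp
qed

lemma powr_add_le_two_mult:
  fixes a b r :: real
  assumes "0 \<le> a" "0 \<le> b" "0 \<le> r" "r \<le> 1"
  shows "(a + b) powr r \<le> 2 * (a powr r + b powr r)"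
proof -
  have "2 powr r \<le> 2 powr 1" using assms by (intro powr_mono) auto
  hence "2 powr r * (a powr r + b powr r) \<le> 2 * (a powr r + b powr r)"
    by (intro mult_right_mono) auto
  with powr_add_le_two_powr[OF assms(1-3)] show ?thesis by linarith
qed

lemma powr_root_le:
  fixes L X K e c :: real
  assumes "0 < L" "0 \<le> X" "0 \<le> K" "0 < e" "L powr (c * e) * X \<le> K powr e"
  shows "L powr c * X powr (1/e) \<le> K"
proof -
  have "(L powr (c * e) * X) powr (1/e) \<le> (K powr e) powr (1/e)"
    using assms by (intro powr_mono2) auto
  thus ?thesis using assms by (simp add: powr_mult powr_powr)
qed

lemma powr_neg_mult_powr_le:
  fixes L M c a :: real
  assumes "0 < L" "0 \<le> M" "M \<le> c * L" "0 \<le> c" "0 \<le> a"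
  shows "L powr (-a) * M powr a \<le> c powr a"
proof -
  have "L powr (-a) * M powr a \<le> L powr (-a) * (c powr a * L powr a)"
    using assms by (auto simp: powr_mult[symmetric] intro!: mult_left_mono powr_mono2)
  also have "\<dots> = c powr a" using assms by (simp add: powr_minus field_simps)
  finally show ?thesis .
qed

lemma UN_less_add_inverse_Suc:
  fixes a :: real
  shows "(\<Union>n. {z\<in>A. a + 1 / Suc n < h z}) = {z\<in>A. a < h z}"
proof (intro equalityI subsetI)
  fix z assume z: "z \<in> {z\<in>A. a < h z}"
  hence "0 < h z - a" by simp
  then obtain n where "1 / Suc n < h z - a" by (rule nat_approx_posE)
  with z show "z \<in> (\<Union>n. {z\<in>A. a + 1 / Suc n < h z})" by (auto simp: algebra_simps)
next
  fix z assume "z \<in> (\<Union>n. {z\<in>A. a + 1 / Suc n < h z})"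
  then obtain n where n: "z \<in> A" "a + 1 / Suc n < h z" by blast
  have "0 < 1 / real (Suc n)" by simp
  hence "a < h z" using n(2) by linarith
  with n(1) show "z \<in> {z\<in>A. a < h z}" by simp
qed

lemma set_integral_nonneg:
  fixes f :: "'b \<Rightarrow> real"
  assumes "\<And>x. x \<in> A \<Longrightarrow> 0 \<le> f x"
  shows "0 \<le> (LINT x:A|M. f x)"
  unfolding set_lebesgue_integral_def using assms
  by (intro Bochner_Integration.integral_nonneg) (auto simp: indicator_def)

lemma ennreal_set_integral_eq_nn_integral:
  fixes h :: "'b \<Rightarrow> real"
  assumes "set_integrable M A h" "\<And>x. x \<in> A \<Longrightarrow> 0 \<le> h x"
  shows "ennreal (LINT x:A|M. h x) = (\<integral>\<^sup>+x. ennreal (h x) * indicator A x \<partial>M)"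
proof -
  have "AE x in M. 0 \<le> h x * indicator A x" using assms(2) by (auto simp: indicator_def)
  thus ?thesis
    unfolding set_lebesgue_integral_def nn_integral_set_ennreal using assms(1)
    by (subst nn_integral_eq_integral) (simp_all add: mult_ac set_integrable_def)
qed

lemma set_integrable_borel_measurable_ennreal:
  fixes h :: "'b \<Rightarrow> real"
  assumes "set_integrable M A h"
  shows "(\<lambda>x. ennreal (h x) * indicator A x) \<in> borel_measurable M"
proof -
  have "(\<lambda>x. indicator A x *\<^sub>R h x) \<in> borel_measurable M"
    using assms unfolding set_integrable_def by (rule borel_measurable_integrable)
  hence "(\<lambda>x. ennreal (indicator A x *\<^sub>R h x)) \<in> borel_measurable M" by measurable
  moreover have "(\<lambda>x. ennreal (indicator A x *\<^sub>R h x)) = (\<lambda>x. ennreal (h x) * indicator A x)"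
    by (auto simp: indicator_def fun_eq_iff)
  ultimately show ?thesis by simp
qed

lemma set_integrable_Icc_antimono:
  fixes h :: "real \<Rightarrow> real"
  assumes "\<And>x y. u \<le> x \<Longrightarrow> x \<le> y \<Longrightarrow> y \<le> v \<Longrightarrow> h y \<le> h x"
  shows "set_integrable lborel {u..v} h"
proof -
  have "mono_on {u..v} (\<lambda>x. - h x)" using assms by (auto simp: mono_on_def)
  hence "(\<lambda>x. - h x) \<in> borel_measurable (restrict_space borel {u..v})"
    by (rule borel_measurable_mono_on_fnc)
  hence "(\<lambda>x. - (- h x)) \<in> borel_measurable (restrict_space borel {u..v})" by measurable
  hence "(\<lambda>x. indicator {u..v} x *\<^sub>R h x) \<in> borel_measurable lborel"
    by (subst (asm) borel_measurable_restrict_space_iff) auto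
  moreover have "norm (indicator {u..v} x *\<^sub>R h x) \<le> \<bar>h u\<bar> + \<bar>h v\<bar>" if "x \<in> {u..v}" for x
    using assms[of u x] assms[of x v] that by auto
  ultimately show ?thesis unfolding set_integrable_def
    by (intro integrableI_bounded_set[where A="{u..v}" and B="\<bar>h u\<bar> + \<bar>h v\<bar>"])
       (auto simp: emeasure_lborel_Icc_eq)
qed

lemma set_integral_Icc_split:
  fixes h :: "real \<Rightarrow> real"
  assumes "u \<le> v" "v \<le> w" "set_integrable lborel {u..w} h"
  shows "(LINT x:{u..w}|lborel. h x) = (LINT x:{u..v}|lborel. h x) + (LINT x:{v..w}|lborel. h x)"
proof -
  have "{u..w} = {u..v} \<union> {v..w}" using assms by auto
  moreover have "AE x in lborel. \<not> (x \<in> {u..v} \<and> x \<in> {v..w})"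
    using AE_lborel_singleton[of v] by eventually_elim auto
  ultimately show ?thesis
    using assms by (auto intro!: set_integral_Un_AE set_integrable_subset[OF assms(3)])
qed

lemma set_integral_Icc_subset_mono:
  fixes h :: "real \<Rightarrow> real"
  assumes "u' \<le> u" "u \<le> v" "v \<le> v'" "set_integrable lborel {u'..v'} h"
    and "\<And>x. u' \<le> x \<Longrightarrow> x \<le> v' \<Longrightarrow> 0 \<le> h x"
  shows "(LINT x:{u..v}|lborel. h x) \<le> (LINT x:{u'..v'}|lborel. h x)"
proof -
  have "set_integrable lborel {u..v'} h"
    using assms by (intro set_integrable_subset[OF assms(4)]) auto
  hence "(LINT x:{u'..v'}|lborel. h x)
      = (LINT x:{u'..u}|lborel. h x) + (LINT x:{u..v}|lborel. h x) + (LINT x:{v..v'}|lborel. h x)"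
    using assms by (simp add: set_integral_Icc_split)
  moreover have "0 \<le> (LINT x:{u'..u}|lborel. h x)" "0 \<le> (LINT x:{v..v'}|lborel. h x)"
    using assms by (auto intro!: set_integral_nonneg)
  ultimately show ?thesis by linarith
qed

lemma set_integral_Icc_rescale:
  fixes h :: "real \<Rightarrow> real"
  assumes "0 < c"
  shows "(LINT x:{u..v}|lborel. h (x/c)) = c * (LINT x:{u/c..v/c}|lborel. h x)"
proof -
  have "(LINT x:{u/c..v/c}|lborel. h x)
      = \<bar>1/c\<bar> *\<^sub>R (\<integral>x. indicator {u/c..v/c} (0 + 1/c * x) *\<^sub>R h (0 + 1/c * x) \<partial>lborel)"
    unfolding set_lebesgue_integral_def using assms by (intro lborel_integral_real_affine) simp
  also have "(\<lambda>x. indicator {u/c..v/c} (0 + 1/c * x) *\<^sub>R h (0 + 1/c * x))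
      = (\<lambda>x::real. indicator {u..v} x *\<^sub>R h (x/c))"
    using assms by (auto simp: indicator_def fun_eq_iff divide_le_cancel)
  finally show ?thesis using assms unfolding set_lebesgue_integral_def by simp
qed

lemma set_integral_Icc_powr:
  fixes r :: real
  assumes "0 < u" "u \<le> v" "r \<noteq> 1"
  shows "(LINT x:{u..v}|lborel. x powr (-r)) = (v powr (1-r) - u powr (1-r)) / (1-r)"
proof -
  have "(LINT x:{u..v}|lborel. x powr (-r)) = v powr (1-r) / (1-r) - u powr (1-r) / (1-r)"
    unfolding set_lebesgue_integral_def
  proof (rule integral_FTC_atLeastAtMost[OF assms(2)])
    fix x assume "u \<le> x" "x \<le> v"
    hence "0 < x" using assms by simp
    have "((\<lambda>z. z powr (1-r) / (1-r)) has_real_derivative ((1-r) * x powr (1-r-1)) / (1-r)) (at x)"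
      by (rule DERIV_cdivide[OF has_real_derivative_powr[OF \<open>0<x\<close>]])
    moreover have "((1-r) * x powr (1-r-1)) / (1-r) = x powr (-r)" using assms by simp
    ultimately show "((\<lambda>z. z powr (1-r) / (1-r)) has_vector_derivative x powr (-r)) (at x within {u..v})"
      by (simp add: has_real_derivative_iff_has_vector_derivative[symmetric] has_field_derivative_at_within)
  next
    show "continuous_on {u..v} (\<lambda>x. x powr (-r))" using assms by (intro continuous_intros) auto
  qed
  thus ?thesis by (simp add: diff_divide_distrib)
qed

lemma set_integral_Icc_powr_le:
  fixes r :: real
  assumes "0 < u" "u \<le> v" "r < 1"
  shows "(LINT x:{u..v}|lborel. x powr (-r)) \<le> v powr (1-r) / (1-r)"
  using assms by (simp add: set_integral_Icc_powr divide_right_mono)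

lemma psi_pos: "0 < x \<Longrightarrow> x \<le> 1 \<Longrightarrow> 0 < psi p q \<alpha> x"
  unfolding psi_def using one_minus_ln_pos[of x] by simp

lemma psi_strict_mono:
  assumes "0 < 1/p - 1/q" "0 < \<alpha>/p" "0 < x" "x < y" "y \<le> 1"
  shows "psi p q \<alpha> x < psi p q \<alpha> y"
proof -
  have "x powr (1/p - 1/q) < y powr (1/p - 1/q)" using assms by (intro powr_less_mono2) auto
  moreover have "(1 - ln x) powr (- \<alpha> / p) < (1 - ln y) powr (- \<alpha> / p)"
    using assms one_minus_ln_pos[of y] by (intro powr_less_mono2_neg) auto
  ultimately show ?thesis
    unfolding psi_def using assms one_minus_ln_pos[of y] by (intro mult_strict_mono) auto
qed

lemma one_minus_ln_powr_mult_le_psi_powr: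
  assumes "0 < p" "0 \<le> \<alpha>" "0 < s" "s \<le> v" "v \<le> 1"
  shows "(1 - ln s) powr (-\<alpha>) * v powr (1 - p/q) \<le> psi p q \<alpha> v powr p"
proof -
  have "(1 - ln s) powr (-\<alpha>) * v powr (1 - p/q) \<le> (1 - ln v) powr (-\<alpha>) * v powr (1 - p/q)"
    using assms one_minus_ln_pos[of v] by (intro mult_right_mono powr_mono2') auto
  also have "(1/p - 1/q) * p = 1 - p/q" "-\<alpha>/p * p = -\<alpha>" using assms(1) by (simp_all add: field_simps)
  hence "(1 - ln v) powr (-\<alpha>) * v powr (1 - p/q) = psi p q \<alpha> v powr p"
    unfolding psi_def using assms one_minus_ln_pos[of v] by (simp add: powr_mult powr_powr mult.commute)
  finally show ?thesis .
qed

lemma psi_root_le: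
  assumes p: "0 < p" and "0 \<le> \<alpha>" and v: "0 < v" "v < 1"
  shows "psi p q \<alpha> v * v powr (1/q)
    \<le> 2 powr (1/p) * (1 + ln 2) powr (\<alpha>/p) * ((1 - ln (v/2)) powr (-\<alpha>/p) * (v/2) powr (1/p))"
proof -
  define L where "L = 1 - ln v"
  define L2 where "L2 = 1 - ln (v/2)"
  have L: "0 < L" "0 < L2" unfolding L_def L2_def using v one_minus_ln_pos[of v] one_minus_ln_pos[of "v/2"] by auto
  have "L powr (-(\<alpha>/p)) * L2 powr (\<alpha>/p) \<le> (1 + ln 2) powr (\<alpha>/p)"
    using one_minus_ln_divide_le[of v 2] v L p \<open>0 \<le> \<alpha>\<close> unfolding L_def L2_def
    by (intro powr_neg_mult_powr_le) auto
  hence "L2 powr (-\<alpha>/p) * (L powr (-(\<alpha>/p)) * L2 powr (\<alpha>/p)) \<le> L2 powr (-\<alpha>/p) * (1 + ln 2) powr (\<alpha>/p)"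
    by (intro mult_left_mono) auto
  moreover have "L2 powr (-\<alpha>/p) * (L powr (-(\<alpha>/p)) * L2 powr (\<alpha>/p)) = L powr (-\<alpha>/p)"
    using L by (simp add: powr_minus field_simps)
  ultimately have "L powr (-\<alpha>/p) \<le> L2 powr (-\<alpha>/p) * (1 + ln 2) powr (\<alpha>/p)"
    by linarith
  hence "2 powr (1/p) * (v/2) powr (1/p) * L powr (-\<alpha>/p)
      \<le> 2 powr (1/p) * (v/2) powr (1/p) * (L2 powr (-\<alpha>/p) * (1 + ln 2) powr (\<alpha>/p))"
    by (intro mult_left_mono) auto
  moreover have "psi p q \<alpha> v * v powr (1/q) = 2 powr (1/p) * (v/2) powr (1/p) * L powr (-\<alpha>/p)"
    unfolding psi_def L_def using v by (simp add: powr_add[symmetric] powr_divide)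
  ultimately show ?thesis unfolding L2_def by (simp add: ac_simps)
qed

lemma phi_psi:
  assumes a: "0 < 1/p - 1/q" and b: "0 < \<alpha>/p" and t: "0 < t" "t < 1"
  shows "phi p q \<alpha> t \<in> {0<..<1}" "psi p q \<alpha> (phi p q \<alpha> t) = t"
proof -
  define d where "d = 1/p - 1/q"
  have "0 < d" using a by (simp add: d_def)
  define x0 where "x0 = t powr (1 / d)"
  have x0: "0 < x0" "x0 < 1" unfolding x0_def using \<open>0 < d\<close> t powr_less_mono2[of "1 / d" t 1] by auto
  have "x0 powr d = t" unfolding x0_def using \<open>0 < d\<close> t by (simp add: powr_powr)
  hence "x0 powr (1/p - 1/q) = t" by (simp add: d_def)
  hence "psi p q \<alpha> x0 = t * (1 - ln x0) powr (- \<alpha> / p)" unfolding psi_def by simp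
  also have "\<dots> < t" using x0 b t by (simp add: powr_less_one)
  finally have low: "psi p q \<alpha> x0 \<le> t" by simp
  have "\<forall>x\<in>{x0..1}. 0 < x \<and> 0 < 1 - ln x" using x0 one_minus_ln_pos by auto
  hence cont: "continuous_on {x0..1} (psi p q \<alpha>)" unfolding psi_def by (intro continuous_intros) auto
  have psi1: "psi p q \<alpha> 1 = 1" by (simp add: psi_def)
  obtain s where s: "x0 \<le> s" "s \<le> 1" "psi p q \<alpha> s = t"
    using IVT'[of "psi p q \<alpha>" x0 t 1, OF low _ _ cont] t x0 psi1 by auto
  have s01: "s \<in> {0<..<1}" using s x0 t psi1 by (cases "s = 1") auto
  have "r = s" if "r \<in> {0<..<1}" "psi p q \<alpha> r = t" for r
  proof (cases r s rule: linorder_cases)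
    case less
    hence "psi p q \<alpha> r < psi p q \<alpha> s" using psi_strict_mono[OF a b] that(1) s(2) by simp
    with that(2) s(3) show ?thesis by simp
  next
    case greater
    hence "psi p q \<alpha> s < psi p q \<alpha> r" using psi_strict_mono[OF a b] that(1) s01 by simp
    with that(2) s(3) show ?thesis by simp
  qed simp
  hence "phi p q \<alpha> t = s" unfolding phi_def using s(3) s01 by (intro the_equality) blast+
  thus "phi p q \<alpha> t \<in> {0<..<1}" "psi p q \<alpha> (phi p q \<alpha> t) = t" using s s01 by simp_all
qed

lemma gl_fun_le_gl_norm:
  assumes "g \<in> GL \<Omega> p \<alpha>" "u \<in> {0<..<1}"
  shows "gl_fun \<Omega> p \<alpha> g u \<le> gl_norm \<Omega> p \<alpha> g"
  unfolding gl_norm_def using assms unfolding GL_def by (intro cSUP_upper) auto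

lemma gl_norm_nonneg:
  assumes "g \<in> GL \<Omega> p \<alpha>"
  shows "0 \<le> gl_norm \<Omega> p \<alpha> g"
proof -
  have "0 \<le> gl_fun \<Omega> p \<alpha> g (1/2)" unfolding gl_fun_def by simp
  also have "\<dots> \<le> gl_norm \<Omega> p \<alpha> g" using gl_fun_le_gl_norm[OF assms, of "1/2"] by simp
  finally show ?thesis .
qed

lemma set_integral_rearr_le_gl_norm:
  assumes g: "g \<in> GL \<Omega> p \<alpha>" and u: "0 < u" "u < 1" and p: "0 < p"
  shows "(LINT x:{u..1}|lborel. rearr \<Omega> g x powr p) \<le> gl_norm \<Omega> p \<alpha> g powr p * (1 - ln u) powr \<alpha>"
proof -
  define Y where "Y = (LINT x:{u..1}|lborel. rearr \<Omega> g x powr p)"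
  define G where "G = gl_norm \<Omega> p \<alpha> g"
  define L where "L = 1 - ln u"
  have L: "0 < L" unfolding L_def using one_minus_ln_pos u by simp
  have Y0: "0 \<le> Y" unfolding Y_def by (intro set_integral_nonneg) simp
  have "L powr (- \<alpha> / p) * Y powr (1/p) \<le> G"
    using gl_fun_le_gl_norm[OF g, of u] u unfolding gl_fun_def Y_def G_def L_def by simp
  hence "Y powr (1/p) \<le> G * L powr (\<alpha>/p)"
    using L by (simp add: powr_minus divide_simps mult.commute)
  hence "(Y powr (1/p)) powr p \<le> (G * L powr (\<alpha>/p)) powr p"
    using p Y0 by (intro powr_mono2) auto
  thus ?thesis using Y0 p unfolding Y_def[symmetric] G_def[symmetric] L_def[symmetric]
    by (simp add: powr_powr powr_mult)
qed

definition gl_fun_upto :: "'a::euclidean_space set \<Rightarrow> real \<Rightarrow> real \<Rightarrow> ('a \<Rightarrow> real) \<Rightarrow> real \<Rightarrow> real \<Rightarrow> real" where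
  "gl_fun_upto \<Omega> p \<alpha> f v s =
     (1 - ln s) powr (- \<alpha> / p) * (LINT x:{s..v}|lborel. rearr \<Omega> f x powr p) powr (1 / p)"

definition Lq_tail :: "'a::euclidean_space set \<Rightarrow> real \<Rightarrow> ('a \<Rightarrow> real) \<Rightarrow> real \<Rightarrow> real" where
  "Lq_tail \<Omega> q f v = (LINT x:{v..1}|lborel. rearr \<Omega> f x powr q) powr (1 / q)"

text \<open>The right-hand side of the theorem, parametrised by \<open>v = phi t\<close>, i.e. \<open>t = psi v\<close>.\<close>

definition holmstedt :: "'a::euclidean_space set \<Rightarrow> real \<Rightarrow> real \<Rightarrow> real \<Rightarrow> ('a \<Rightarrow> real) \<Rightarrow> real \<Rightarrow> real" where
  "holmstedt \<Omega> p \<alpha> q f v = (SUP s\<in>{0<..<v}. gl_fun_upto \<Omega> p \<alpha> f v s) + psi p q \<alpha> v * Lq_tail \<Omega> q f v"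

lemma Kfun_le_decomp:
  assumes "(g0, g1) \<in> decomps \<Omega> p \<alpha> q f" "0 \<le> t"
  shows "Kfun \<Omega> p \<alpha> q f t \<le> gl_norm \<Omega> p \<alpha> g0 + t * Lq_norm \<Omega> q g1"
proof -
  have "bdd_below ((\<lambda>g. gl_norm \<Omega> p \<alpha> (fst g) + t * Lq_norm \<Omega> q (snd g)) ` decomps \<Omega> p \<alpha> q f)"
    using assms(2) gl_norm_nonneg
    by (intro bdd_belowI2[where m=0] add_nonneg_nonneg mult_nonneg_nonneg)
       (auto simp: decomps_def Lq_norm_def)
  from cINF_lower[OF this assms(1)] show ?thesis unfolding Kfun_def by simp
qed

lemma Kfun_nonneg:
  assumes "f \<in> GL_plus_Lq \<Omega> p \<alpha> q" "0 \<le> t"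
  shows "0 \<le> Kfun \<Omega> p \<alpha> q f t"
  using assms gl_norm_nonneg unfolding Kfun_def GL_plus_Lq_def
  by (intro cINF_greatest add_nonneg_nonneg mult_nonneg_nonneg) (auto simp: decomps_def Lq_norm_def)

definition K_const_head :: "real \<Rightarrow> real \<Rightarrow> real \<Rightarrow> real" where
  "K_const_head p q \<alpha> =
     (2 powr (p+1) * (1 + ln 2) powr \<alpha> + 2 powr p * 2 powr (p/q) / (1 - p/q)) powr (1/p)"

definition K_const_tail :: "real \<Rightarrow> real \<Rightarrow> real \<Rightarrow> real" where
  "K_const_tail p q \<alpha> =
     (2 powr (q+1) * 4 powr ((q-p)/p) * (1 + ln 4) powr (\<alpha>*q/p) + 2 powr (q+1)) powr (1/q)"

definition K_const_upper :: "real \<Rightarrow> real \<Rightarrow> real" where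
  "K_const_upper p \<alpha> = 3 + 2 * (2 powr (1/p) * (1 + ln 2) powr (\<alpha>/p))"

lemma K_const_head_pos: "0 < p \<Longrightarrow> p < q \<Longrightarrow> 0 < K_const_head p q \<alpha>"
proof -
  assume "0 < p" "p < q"
  hence "0 < 1 - p/q" by simp
  hence "0 \<le> 2 powr p * 2 powr (p/q) / (1 - p/q)" by simp
  moreover have "0 < 1 + ln (2::real)" using ln_ge_zero[of "2::real"] by linarith
  hence "0 < 2 powr (p+1) * (1 + ln 2) powr \<alpha>" by simp
  ultimately show ?thesis unfolding K_const_head_def by simp
qed

lemma K_const_tail_nonneg: "0 \<le> K_const_tail p q \<alpha>"
  by (simp add: K_const_tail_def)

lemma K_const_upper_pos: "0 < K_const_upper p \<alpha>"
proof -
  have "0 \<le> 2 powr (1/p) * (1 + ln 2) powr (\<alpha>/p)" by (intro mult_nonneg_nonneg) simp_all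
  thus ?thesis unfolding K_const_upper_def by linarith
qed

definition truncate_at :: "real \<Rightarrow> ('a \<Rightarrow> real) \<Rightarrow> 'a \<Rightarrow> real" where
  "truncate_at l f z = max (-l) (min l (f z))"

lemma abs_truncate_at_le:
  assumes "0 \<le> l"
  shows "\<bar>truncate_at l f z\<bar> \<le> \<bar>f z\<bar>" "\<bar>truncate_at l f z\<bar> \<le> l"
  using assms by (auto simp: truncate_at_def max_def min_def)

section \<open>The decreasing rearrangement on a domain of measure one\<close>

locale unit_domain =
  fixes \<Omega> :: "'a::euclidean_space set"
  assumes sets_\<Omega>: "\<Omega> \<in> sets lebesgue" and emeasure_\<Omega>: "emeasure lebesgue \<Omega> = 1"
begin

definition level_measure :: "('a \<Rightarrow> real) \<Rightarrow> real \<Rightarrow> ennreal" where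
  "level_measure g y = emeasure lebesgue {x\<in>\<Omega>. y < \<bar>g x\<bar>}"

lemma meas_on_iff_restrict: "meas_on \<Omega> g \<longleftrightarrow> g \<in> borel_measurable (restrict_space lebesgue \<Omega>)"
  unfolding meas_on_def set_borel_measurable_def using sets_\<Omega>
  by (subst borel_measurable_restrict_space_iff) auto

lemma sets_abs_pred:
  assumes "meas_on \<Omega> g" "Measurable.pred borel P"
  shows "{x\<in>\<Omega>. P \<bar>g x\<bar>} \<in> sets lebesgue"
proof -
  have "g \<in> borel_measurable (restrict_space lebesgue \<Omega>)" using assms(1) meas_on_iff_restrict by blast
  hence "Measurable.pred (restrict_space lebesgue \<Omega>) (\<lambda>x. P \<bar>g x\<bar>)" using assms(2) by measurable
  hence "{x \<in> space (restrict_space lebesgue \<Omega>). P \<bar>g x\<bar>} \<in> sets (restrict_space lebesgue \<Omega>)"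
    by (simp add: pred_def)
  thus ?thesis using sets_\<Omega> by (simp add: space_restrict_space sets_restrict_space_iff)
qed

lemma sets_level: "meas_on \<Omega> g \<Longrightarrow> {x\<in>\<Omega>. y < \<bar>g x\<bar>} \<in> sets lebesgue"
  by (rule sets_abs_pred) auto

lemma level_measure_le_one: "level_measure g y \<le> 1"
  unfolding level_measure_def emeasure_\<Omega>[symmetric] using sets_\<Omega> by (intro emeasure_mono) auto

lemma level_measure_finite: "level_measure g y < \<infinity>"
  using order.strict_trans1[OF level_measure_le_one ennreal_one_less_top] by simp

lemma level_measure_antimono: "meas_on \<Omega> g \<Longrightarrow> y \<le> z \<Longrightarrow> level_measure g z \<le> level_measure g y"
  unfolding level_measure_def by (intro emeasure_mono sets_level) auto

lemma ex_level_measure_le: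
  assumes "meas_on \<Omega> g" "0 < x"
  shows "\<exists>y\<ge>0. level_measure g y \<le> ennreal x"
proof -
  let ?A = "\<lambda>n::nat. {z\<in>\<Omega>. real n < \<bar>g z\<bar>}"
  have "(INF n. emeasure lebesgue (?A n)) = emeasure lebesgue (\<Inter>n. ?A n)"
  proof (rule INF_emeasure_decseq)
    show "range ?A \<subseteq> sets lebesgue" using sets_level[OF assms(1)] by blast
    show "decseq ?A" by (auto simp: decseq_def)
    fix n show "emeasure lebesgue (?A n) \<noteq> \<infinity>"
      using level_measure_finite[of g "real n", unfolded level_measure_def] by (simp only: less_top)
  qed
  also have "(\<Inter>n. ?A n) = {}"
  proof -
    have "z \<notin> ?A (nat \<lceil>\<bar>g z\<bar>\<rceil>)" for z by (simp add: not_less)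
    thus ?thesis by blast
  qed
  finally have "(INF n. emeasure lebesgue (?A n)) < ennreal x" using assms by simp
  then obtain n where "emeasure lebesgue (?A n) < ennreal x" by (auto simp: INF_less_iff)
  thus ?thesis unfolding level_measure_def by (intro exI[of _ "real n"]) auto
qed

lemma rearr_eq_Inf: "rearr \<Omega> g x = Inf {y. 0 \<le> y \<and> level_measure g y \<le> ennreal x}"
  unfolding rearr_def level_measure_def ..

lemma rearr_nonneg: "meas_on \<Omega> g \<Longrightarrow> 0 < x \<Longrightarrow> 0 \<le> rearr \<Omega> g x"
  unfolding rearr_eq_Inf by (drule (1) ex_level_measure_le) (auto intro: cInf_greatest)

lemma rearr_le_of_level_measure_le:
  "0 \<le> y \<Longrightarrow> level_measure g y \<le> ennreal x \<Longrightarrow> rearr \<Omega> g x \<le> y"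
  unfolding rearr_eq_Inf by (intro cInf_lower) (auto intro: bdd_belowI[of _ 0])

text \<open>The infimum defining the rearrangement is attained, by continuity of the measure from below.\<close>

lemma level_measure_rearr_le:
  assumes g: "meas_on \<Omega> g" and x: "0 < x"
  shows "level_measure g (rearr \<Omega> g x) \<le> ennreal x"
proof -
  define a where "a = rearr \<Omega> g x"
  let ?A = "\<lambda>n::nat. {z\<in>\<Omega>. a + 1 / Suc n < \<bar>g z\<bar>}"
  have "level_measure g (a + 1 / Suc n) \<le> ennreal x" for n
  proof -
    let ?S = "{y. 0 \<le> y \<and> level_measure g y \<le> ennreal x}"
    have "?S \<noteq> {}" using ex_level_measure_le[OF g x] by auto
    moreover have "Inf ?S < a + 1 / Suc n" unfolding a_def rearr_eq_Inf by simp
    ultimately obtain y where y: "y \<in> ?S" "y < a + 1 / Suc n"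
      by (subst (asm) cInf_less_iff) (auto intro: bdd_belowI[of _ 0])
    have "level_measure g (a + 1 / Suc n) \<le> level_measure g y"
      using y by (intro level_measure_antimono[OF g]) auto
    also have "\<dots> \<le> ennreal x" using y(1) by simp
    finally show ?thesis .
  qed
  note below = this
  have "(\<Union>n. ?A n) = {z\<in>\<Omega>. a < \<bar>g z\<bar>}" by (rule UN_less_add_inverse_Suc)
  hence "level_measure g a = emeasure lebesgue (\<Union>n. ?A n)" by (simp only: level_measure_def)
  also have "\<dots> = (SUP n. emeasure lebesgue (?A n))"
  proof (rule SUP_emeasure_incseq[symmetric])
    show "range ?A \<subseteq> sets lebesgue" using sets_level[OF g] by blast
    show "incseq ?A"
    proof (rule incseq_SucI)
      fix n
      have "1 / real (Suc (Suc n)) \<le> 1 / Suc n" by (simp add: frac_le)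
      thus "?A n \<subseteq> ?A (Suc n)" by auto
    qed
  qed
  also have "\<dots> \<le> ennreal x" using below unfolding level_measure_def by (intro SUP_least) blast
  finally show ?thesis unfolding a_def .
qed

lemma less_rearr_iff:
  assumes g: "meas_on \<Omega> g" and "0 < x" "0 \<le> l"
  shows "l < rearr \<Omega> g x \<longleftrightarrow> ennreal x < level_measure g l"
proof
  assume "l < rearr \<Omega> g x"
  thus "ennreal x < level_measure g l"
    using rearr_le_of_level_measure_le[OF \<open>0 \<le> l\<close>, of g x] by (meson not_le)
next
  assume "ennreal x < level_measure g l"
  moreover have "level_measure g l \<le> level_measure g (rearr \<Omega> g x)" if "rearr \<Omega> g x \<le> l"
    using that by (rule level_measure_antimono[OF g])
  ultimately show "l < rearr \<Omega> g x"
    using level_measure_rearr_le[OF g \<open>0 < x\<close>] by force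
qed

lemma rearr_antimono:
  assumes g: "meas_on \<Omega> g" and "0 < x" "x \<le> y"
  shows "rearr \<Omega> g y \<le> rearr \<Omega> g x"
  using level_measure_rearr_le[OF g \<open>0 < x\<close>] ennreal_leI[OF \<open>x \<le> y\<close>]
  by (intro rearr_le_of_level_measure_le rearr_nonneg[OF g \<open>0 < x\<close>]) order

lemma rearr_mono:
  assumes g: "meas_on \<Omega> g" and h: "meas_on \<Omega> h" and x: "0 < x"
    and le: "\<And>z. z \<in> \<Omega> \<Longrightarrow> \<bar>g z\<bar> \<le> \<bar>h z\<bar>"
  shows "rearr \<Omega> g x \<le> rearr \<Omega> h x"
proof -
  have "level_measure g (rearr \<Omega> h x) \<le> level_measure h (rearr \<Omega> h x)"
    unfolding level_measure_def using le by (intro emeasure_mono sets_level[OF h]) (auto intro: less_le_trans)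
  also have "\<dots> \<le> ennreal x" using level_measure_rearr_le[OF h x] .
  finally show ?thesis by (intro rearr_le_of_level_measure_le rearr_nonneg[OF h x])
qed

lemma rearr_le_bound:
  assumes "0 \<le> c" "\<And>z. z \<in> \<Omega> \<Longrightarrow> \<bar>g z\<bar> \<le> c" "0 \<le> x"
  shows "rearr \<Omega> g x \<le> c"
proof -
  have "{z\<in>\<Omega>. c < \<bar>g z\<bar>} = {}" using assms(2) by force
  hence "level_measure g c = 0" by (simp only: level_measure_def emeasure_empty)
  thus ?thesis using assms by (intro rearr_le_of_level_measure_le) auto
qed

lemma rearr_add_le:
  assumes f: "meas_on \<Omega> f" and g0: "meas_on \<Omega> g0" and g1: "meas_on \<Omega> g1"
    and eq: "\<And>z. z \<in> \<Omega> \<Longrightarrow> f z = g0 z + g1 z" and x: "0 < x" and y: "0 < y"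
  shows "rearr \<Omega> f (x + y) \<le> rearr \<Omega> g0 x + rearr \<Omega> g1 y"
proof -
  let ?a = "rearr \<Omega> g0 x" and ?b = "rearr \<Omega> g1 y"
  have "{z\<in>\<Omega>. ?a + ?b < \<bar>f z\<bar>} \<subseteq> {z\<in>\<Omega>. ?a < \<bar>g0 z\<bar>} \<union> {z\<in>\<Omega>. ?b < \<bar>g1 z\<bar>}"
    using eq by (auto simp: not_less intro: order.trans[OF abs_triangle_ineq])
  hence "level_measure f (?a + ?b) \<le> emeasure lebesgue ({z\<in>\<Omega>. ?a < \<bar>g0 z\<bar>} \<union> {z\<in>\<Omega>. ?b < \<bar>g1 z\<bar>})"
    unfolding level_measure_def using sets_level[OF g0] sets_level[OF g1] by (intro emeasure_mono) auto
  also have "\<dots> \<le> level_measure g0 ?a + level_measure g1 ?b"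
    unfolding level_measure_def using sets_level[OF g0] sets_level[OF g1]
    by (intro emeasure_subadditive) auto
  also have "\<dots> \<le> ennreal (x + y)"
    using level_measure_rearr_le[OF g0 x] level_measure_rearr_le[OF g1 y] x y
    by (simp add: add_mono ennreal_plus)
  finally show ?thesis
    using rearr_nonneg[OF g0 x] rearr_nonneg[OF g1 y] by (intro rearr_le_of_level_measure_le) auto
qed

lemma rearr_le_Lq_norm:
  assumes g: "g \<in> Lq \<Omega> q" and q: "0 < q" and x: "0 < x"
  shows "rearr \<Omega> g x \<le> x powr (-1/q) * Lq_norm \<Omega> q g"
proof (rule ccontr)
  define I where "I = (LINT z:\<Omega>|lebesgue. \<bar>g z\<bar> powr q)"
  have gm: "meas_on \<Omega> g" and gi: "set_integrable lebesgue \<Omega> (\<lambda>z. \<bar>g z\<bar> powr q)"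
    using g unfolding Lq_def by auto
  have I0: "0 \<le> I" unfolding I_def by (intro set_integral_nonneg) auto
  define c where "c = x powr (-1/q) * Lq_norm \<Omega> q g"
  have "(I / x) powr (1/q) = I powr (1/q) / x powr (1/q)" using I0 x by (simp add: powr_divide)
  also have "\<dots> = c" unfolding c_def Lq_norm_def I_def[symmetric] by (simp add: powr_minus_divide)
  finally have c: "c = (I / x) powr (1/q)" ..
  have c0: "0 \<le> c" by (simp add: c_def Lq_norm_def)
  assume "\<not> rearr \<Omega> g x \<le> x powr (-1/q) * Lq_norm \<Omega> q g"
  hence lt: "c < rearr \<Omega> g x" by (simp add: c_def)
  define l where "l = (c + rearr \<Omega> g x) / 2"
  have l: "c < l" "l < rearr \<Omega> g x" "0 < l" using lt c0 by (auto simp: l_def)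
  have "ennreal x < level_measure g l" using less_rearr_iff[OF gm x] l by auto
  also have "level_measure g l \<le> emeasure lebesgue {z\<in>\<Omega>. l powr q \<le> \<bar>g z\<bar> powr q}"
    unfolding level_measure_def using q l
    by (intro emeasure_mono sets_abs_pred[OF gm]) (auto intro: powr_mono2)
  also have "\<dots> \<le> (1 / l powr q) * I"
    unfolding I_def by (rule integral_Markov_inequality') (use gi sets_\<Omega> l in auto)
  finally have "l powr q < I / x"
    using I0 l x by (subst (asm) ennreal_less_iff) (auto simp: field_simps)
  hence "(l powr q) powr (1/q) < (I / x) powr (1/q)" using q l by (intro powr_less_mono2) auto
  with l q c show False by (simp add: powr_powr)
qed

lemma rearr_measurable:
  assumes g: "meas_on \<Omega> g"
  shows "rearr \<Omega> g \<in> borel_measurable (restrict_space lborel {0<..<1})"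
proof -
  have "mono_on {0<..<1} (\<lambda>x. - rearr \<Omega> g x)"
    using rearr_antimono[OF g] by (auto simp: mono_on_def)
  hence "(\<lambda>x. - rearr \<Omega> g x) \<in> borel_measurable (restrict_space borel {0<..<1})"
    by (rule borel_measurable_mono_on_fnc)
  hence "(\<lambda>x. - (- rearr \<Omega> g x)) \<in> borel_measurable (restrict_space borel {0<..<1})" by measurable
  moreover have "sets (restrict_space lborel {0<..<1::real}) = sets (restrict_space borel {0<..<1})"
    by (simp add: sets_restrict_space)
  ultimately show ?thesis using measurable_cong_sets by fastforce
qed

lemma level_measure_eq_rearr:
  assumes g: "meas_on \<Omega> g"
  shows "level_measure g y = emeasure lborel {x\<in>{0<..<1}. y < rearr \<Omega> g x}"
proof (cases "y < 0")
  case True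
  hence "{z\<in>\<Omega>. y < \<bar>g z\<bar>} = \<Omega>" "{x\<in>{0<..<1}. y < rearr \<Omega> g x} = {0<..<1}"
    using rearr_nonneg[OF g] by (auto intro: less_le_trans)
  thus ?thesis using emeasure_\<Omega> by (simp add: level_measure_def)
next
  case False
  define d where "d = enn2real (level_measure g y)"
  have d: "level_measure g y = ennreal d" "0 \<le> d" "d \<le> 1"
    using level_measure_finite[of g y] level_measure_le_one[of g y]
    by (auto simp: d_def less_top enn2real_leI)
  have "y < rearr \<Omega> g x \<longleftrightarrow> x < d" if "x \<in> {0<..<1}" for x
    using less_rearr_iff[OF g, of x y] that False d by (auto simp: ennreal_less_iff)
  hence "{x\<in>{0<..<1}. y < rearr \<Omega> g x} = {0<..<d}" using d by auto
  thus ?thesis using d by simp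
qed

lemma distr_abs_eq_distr_rearr:
  assumes g: "meas_on \<Omega> g"
  shows "distr (restrict_space lebesgue \<Omega>) borel (\<lambda>z. \<bar>g z\<bar>) = distr (restrict_space lborel {0<..<1}) borel (rearr \<Omega> g)"
    (is "?M1 = ?M2")
proof -
  have "g \<in> borel_measurable (restrict_space lebesgue \<Omega>)" using g meas_on_iff_restrict by blast
  hence m1: "(\<lambda>z. \<bar>g z\<bar>) \<in> measurable (restrict_space lebesgue \<Omega>) borel" by measurable
  have m2: "rearr \<Omega> g \<in> measurable (restrict_space lborel {0<..<1}) borel"
    using rearr_measurable[OF g] .
  have e1: "emeasure ?M1 {y<..} = level_measure g y" for y
  proof -
    have "(\<lambda>z. \<bar>g z\<bar>) -` {y<..} \<inter> space (restrict_space lebesgue \<Omega>) = {z\<in>\<Omega>. y < \<bar>g z\<bar>}"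
      by (auto simp: space_restrict_space)
    thus ?thesis unfolding level_measure_def using sets_\<Omega> emeasure_restrict_space[of \<Omega> lebesgue]
      by (simp add: emeasure_distr[OF m1])
  qed
  have e2: "emeasure ?M2 {y<..} = emeasure lborel {x\<in>{0<..<1}. y < rearr \<Omega> g x}" for y
  proof -
    have "rearr \<Omega> g -` {y<..} \<inter> space (restrict_space lborel {0<..<1}) = {x\<in>{0<..<1}. y < rearr \<Omega> g x}"
      by (auto simp: space_restrict_space)
    moreover have "emeasure (restrict_space lborel {0<..<1}) {x\<in>{0<..<1}. y < rearr \<Omega> g x}
        = emeasure lborel {x\<in>{0<..<1}. y < rearr \<Omega> g x}"
      by (rule emeasure_restrict_space) auto
    ultimately show ?thesis by (simp add: emeasure_distr[OF m2])
  qed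
  show ?thesis
  proof (rule measure_eqI_lessThan)
    fix y
    show "emeasure ?M1 {y<..} < \<infinity>" unfolding e1 by (rule level_measure_finite)
    show "emeasure ?M1 {y<..} = emeasure ?M2 {y<..}" unfolding e1 e2 by (rule level_measure_eq_rearr[OF g])
  qed simp_all
qed

lemma nn_integral_rearr:
  fixes G :: "real \<Rightarrow> ennreal"
  assumes g: "meas_on \<Omega> g" and G: "G \<in> borel_measurable borel"
  shows "(\<integral>\<^sup>+z. G \<bar>g z\<bar> * indicator \<Omega> z \<partial>lebesgue)
       = (\<integral>\<^sup>+x. G (rearr \<Omega> g x) * indicator {0<..<1} x \<partial>lborel)"
proof -
  have "g \<in> borel_measurable (restrict_space lebesgue \<Omega>)" using g meas_on_iff_restrict by blast
  hence m1: "(\<lambda>z. \<bar>g z\<bar>) \<in> measurable (restrict_space lebesgue \<Omega>) borel" by measurable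
  have "(\<integral>\<^sup>+z. G \<bar>g z\<bar> * indicator \<Omega> z \<partial>lebesgue) = (\<integral>\<^sup>+z. G \<bar>g z\<bar> \<partial>restrict_space lebesgue \<Omega>)"
    using sets_\<Omega> by (intro nn_integral_restrict_space[symmetric]) simp
  also have "\<dots> = integral\<^sup>N (distr (restrict_space lebesgue \<Omega>) borel (\<lambda>z. \<bar>g z\<bar>)) G"
    by (rule nn_integral_distr[symmetric, OF m1]) (use G in simp)
  also have "\<dots> = (\<integral>\<^sup>+x. G (rearr \<Omega> g x) \<partial>restrict_space lborel {0<..<1})"
    unfolding distr_abs_eq_distr_rearr[OF g]
    by (rule nn_integral_distr[OF rearr_measurable[OF g]]) (use G in simp)
  also have "\<dots> = (\<integral>\<^sup>+x. G (rearr \<Omega> g x) * indicator {0<..<1} x \<partial>lborel)"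
    by (rule nn_integral_restrict_space) simp
  finally show ?thesis .
qed

lemma set_integrable_rearr_powr:
  assumes "meas_on \<Omega> g" "0 < u" "0 < e" "0 < c"
  shows "set_integrable lborel {u..v} (\<lambda>x. rearr \<Omega> g (x / c) powr e)"
  using assms rearr_antimono[OF assms(1)] rearr_nonneg[OF assms(1)]
  by (intro set_integrable_Icc_antimono powr_mono2) (auto simp: divide_right_mono)

lemma Lq_norm_powr_eq_nn_integral:
  assumes "g \<in> Lq \<Omega> q" "0 < q"
  shows "ennreal (Lq_norm \<Omega> q g powr q) = (\<integral>\<^sup>+z. ennreal (\<bar>g z\<bar> powr q) * indicator \<Omega> z \<partial>lebesgue)"
proof -
  have gi: "set_integrable lebesgue \<Omega> (\<lambda>z. \<bar>g z\<bar> powr q)" using assms unfolding Lq_def by auto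
  have "0 \<le> (LINT z:\<Omega>|lebesgue. \<bar>g z\<bar> powr q)" by (intro set_integral_nonneg) auto
  hence "Lq_norm \<Omega> q g powr q = (LINT z:\<Omega>|lebesgue. \<bar>g z\<bar> powr q)"
    unfolding Lq_norm_def using assms by (simp add: powr_powr)
  thus ?thesis using ennreal_set_integral_eq_nn_integral[OF gi] by simp
qed

lemma set_integral_rearr_le_Lq_norm:
  assumes g: "g \<in> Lq \<Omega> q" and q: "0 < q" and "0 < u" "v < 1"
  shows "(LINT x:{u..v}|lborel. rearr \<Omega> g x powr q) \<le> Lq_norm \<Omega> q g powr q"
proof -
  have gm: "meas_on \<Omega> g" using g unfolding Lq_def by auto
  have "ennreal (LINT x:{u..v}|lborel. rearr \<Omega> g x powr q)
      = (\<integral>\<^sup>+x. ennreal (rearr \<Omega> g x powr q) * indicator {u..v} x \<partial>lborel)"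
    using set_integrable_rearr_powr[OF gm \<open>0 < u\<close> q, of 1]
    by (intro ennreal_set_integral_eq_nn_integral) auto
  also have "\<dots> \<le> (\<integral>\<^sup>+x. ennreal (rearr \<Omega> g x powr q) * indicator {0<..<1} x \<partial>lborel)"
    using assms by (intro nn_integral_mono) (auto simp: indicator_def)
  also have "\<dots> = (\<integral>\<^sup>+z. ennreal (\<bar>g z\<bar> powr q) * indicator \<Omega> z \<partial>lebesgue)"
    by (rule nn_integral_rearr[OF gm, of "\<lambda>y. ennreal (y powr q)", symmetric]) measurable
  also have "\<dots> = ennreal (Lq_norm \<Omega> q g powr q)" using Lq_norm_powr_eq_nn_integral[OF g q] by simp
  finally show ?thesis by (simp add: ennreal_le_iff)
qed

lemma set_integral_rearr_half_le_gl_norm: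
  assumes g: "g \<in> GL \<Omega> p \<alpha>" and p: "0 < p" and u: "0 < u" "u \<le> w" "w < 2"
  shows "(LINT x:{u..w}|lborel. rearr \<Omega> g (x/2) powr p) \<le> 2 * (gl_norm \<Omega> p \<alpha> g powr p * (1 - ln (u/2)) powr \<alpha>)"
proof -
  have gm: "meas_on \<Omega> g" using g unfolding GL_def by auto
  have "(LINT x:{u..w}|lborel. rearr \<Omega> g (x/2) powr p) = 2 * (LINT x:{u/2..w/2}|lborel. rearr \<Omega> g x powr p)"
    by (rule set_integral_Icc_rescale) simp
  also have "(LINT x:{u/2..w/2}|lborel. rearr \<Omega> g x powr p) \<le> (LINT x:{u/2..1}|lborel. rearr \<Omega> g x powr p)"
    using u set_integrable_rearr_powr[OF gm _ p, of "u/2" 1 1]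
    by (intro set_integral_Icc_subset_mono) auto
  also have "\<dots> \<le> gl_norm \<Omega> p \<alpha> g powr p * (1 - ln (u/2)) powr \<alpha>"
    using u p by (intro set_integral_rearr_le_gl_norm[OF g]) auto
  finally show ?thesis by simp
qed

lemma set_integral_rearr_half_le_Lq_norm:
  assumes g: "g \<in> Lq \<Omega> q" and q: "0 < q" and "0 < u" "w < 2"
  shows "(LINT x:{u..w}|lborel. rearr \<Omega> g (x/2) powr q) \<le> 2 * Lq_norm \<Omega> q g powr q"
proof -
  have "(LINT x:{u..w}|lborel. rearr \<Omega> g (x/2) powr q) = 2 * (LINT x:{u/2..w/2}|lborel. rearr \<Omega> g x powr q)"
    by (rule set_integral_Icc_rescale) simp
  also have "(LINT x:{u/2..w/2}|lborel. rearr \<Omega> g x powr q) \<le> Lq_norm \<Omega> q g powr q"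
    using assms by (intro set_integral_rearr_le_Lq_norm[OF g q]) auto
  finally show ?thesis by simp
qed

lemma bounded_Lq:
  assumes g: "meas_on \<Omega> g" and bound: "\<And>z. z \<in> \<Omega> \<Longrightarrow> \<bar>g z\<bar> \<le> l" and q: "0 < q"
  shows "g \<in> Lq \<Omega> q"
proof -
  have "(\<lambda>z. indicator \<Omega> z * g z) \<in> borel_measurable lebesgue"
    using g unfolding meas_on_def set_borel_measurable_def by simp
  hence "(\<lambda>z. \<bar>indicator \<Omega> z * g z\<bar> powr q) \<in> borel_measurable lebesgue" by measurable
  moreover have "(\<lambda>z. \<bar>indicator \<Omega> z * g z\<bar> powr q) = (\<lambda>z. indicator \<Omega> z *\<^sub>R (\<bar>g z\<bar> powr q))"
    using q by (auto simp: indicator_def fun_eq_iff)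
  moreover have "norm (indicator \<Omega> z *\<^sub>R (\<bar>g z\<bar> powr q)) \<le> l powr q" if "z \<in> \<Omega>" for z
    using that bound[of z] q by (auto intro: powr_mono2)
  ultimately have "set_integrable lebesgue \<Omega> (\<lambda>z. \<bar>g z\<bar> powr q)"
    unfolding set_integrable_def using sets_\<Omega> emeasure_\<Omega>
    by (intro integrableI_bounded_set[where A=\<Omega> and B="l powr q"]) auto
  thus ?thesis using g unfolding Lq_def by auto
qed

subsection \<open>Lower bound for the K-functional\<close>

lemma meas_on_sum:
  assumes "meas_on \<Omega> g0" "meas_on \<Omega> g1" "\<And>z. z \<in> \<Omega> \<Longrightarrow> f z = g0 z + g1 z"
  shows "meas_on \<Omega> f"
  using assms(1,2) unfolding meas_on_iff_restrict
  by (rule measurable_cong[THEN iffD1, rotated, OF borel_measurable_add])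
     (use assms(3) in \<open>simp add: space_restrict_space\<close>)

lemma rearr_le_half_add:
  assumes "meas_on \<Omega> g0" "meas_on \<Omega> g1" "\<And>z. z \<in> \<Omega> \<Longrightarrow> f z = g0 z + g1 z" "0 < x"
  shows "rearr \<Omega> f x \<le> rearr \<Omega> g0 (x/2) + rearr \<Omega> g1 (x/2)"
  using rearr_add_le[OF meas_on_sum[OF assms(1-3)] assms(1-3), of "x/2" "x/2"] assms(4) by simp

lemma rearr_powr_le_decomp_head:
  assumes pq: "0 < p" "p < q" and g0: "meas_on \<Omega> g0" and g1: "g1 \<in> Lq \<Omega> q"
    and eq: "\<And>z. z \<in> \<Omega> \<Longrightarrow> f z = g0 z + g1 z" and x: "0 < x"
  shows "rearr \<Omega> f x powr p
    \<le> 2 powr p * rearr \<Omega> g0 (x/2) powr p + 2 powr p * 2 powr (p/q) * Lq_norm \<Omega> q g1 powr p * x powr (-(p/q))"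
proof -
  define N where "N = Lq_norm \<Omega> q g1"
  have g1m: "meas_on \<Omega> g1" using g1 unfolding Lq_def by auto
  have N0: "0 \<le> N" unfolding N_def Lq_norm_def by simp
  have "rearr \<Omega> g1 (x/2) \<le> (x/2) powr (-1/q) * N"
    unfolding N_def using rearr_le_Lq_norm[OF g1, of "x/2"] pq x by simp
  hence "rearr \<Omega> f x \<le> rearr \<Omega> g0 (x/2) + (x/2) powr (-1/q) * N"
    using rearr_le_half_add[OF g0 g1m eq x] by simp
  hence "rearr \<Omega> f x powr p \<le> (rearr \<Omega> g0 (x/2) + (x/2) powr (-1/q) * N) powr p"
    using rearr_nonneg[OF meas_on_sum[OF g0 g1m eq] x] pq by (intro powr_mono2) auto
  also have "\<dots> \<le> 2 powr p * (rearr \<Omega> g0 (x/2) powr p + ((x/2) powr (-1/q) * N) powr p)"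
    using rearr_nonneg[OF g0, of "x/2"] x N0 pq by (intro powr_add_le_two_powr) auto
  also have "((x/2) powr (-1/q) * N) powr p = 2 powr (p/q) * N powr p * x powr (-(p/q))"
  proof -
    have "(x/2) powr (-1/q*p) = x powr (-(p/q)) / 2 powr (-(p/q))" by (simp add: powr_divide)
    also have "\<dots> = x powr (-(p/q)) * 2 powr (p/q)" by (simp add: powr_minus divide_inverse)
    finally show ?thesis by (simp add: powr_mult powr_powr)
  qed
  finally show ?thesis unfolding N_def by (simp add: algebra_simps)
qed

lemma set_integral_rearr_head_le:
  assumes pq: "0 < p" "p < q" and g0: "g0 \<in> GL \<Omega> p \<alpha>" and g1: "g1 \<in> Lq \<Omega> q"
    and eq: "\<And>z. z \<in> \<Omega> \<Longrightarrow> f z = g0 z + g1 z" and s: "0 < s" "s \<le> v" "v \<le> 1"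
  shows "(LINT x:{s..v}|lborel. rearr \<Omega> f x powr p)
    \<le> 2 powr (p+1) * gl_norm \<Omega> p \<alpha> g0 powr p * (1 - ln (s/2)) powr \<alpha>
      + 2 powr p * 2 powr (p/q) / (1 - p/q) * Lq_norm \<Omega> q g1 powr p * v powr (1 - p/q)"
proof -
  define C where "C = 2 powr p * 2 powr (p/q) * Lq_norm \<Omega> q g1 powr p"
  have g0m: "meas_on \<Omega> g0" and g1m: "meas_on \<Omega> g1" using g0 g1 unfolding GL_def Lq_def by auto
  have C0: "0 \<le> C" unfolding C_def by simp
  have i1: "set_integrable lborel {s..v} (\<lambda>x. 2 powr p * rearr \<Omega> g0 (x/2) powr p)"
    using set_integrable_rearr_powr[OF g0m s(1) pq(1), of 2] by simp
  have "continuous_on {s..v} (\<lambda>x. x powr (-(p/q)))" using s by (intro continuous_intros) auto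
  hence "set_integrable lborel {s..v} (\<lambda>x. x powr (-(p/q)))" by (rule borel_integrable_atLeastAtMost')
  hence i2: "set_integrable lborel {s..v} (\<lambda>x. C * x powr (-(p/q)))" by simp
  have "(LINT x:{s..v}|lborel. rearr \<Omega> f x powr p)
      \<le> (LINT x:{s..v}|lborel. 2 powr p * rearr \<Omega> g0 (x/2) powr p + C * x powr (-(p/q)))"
    using rearr_powr_le_decomp_head[OF pq g0m g1 eq] s
      set_integrable_rearr_powr[OF meas_on_sum[OF g0m g1m eq] s(1) pq(1), of 1]
    unfolding C_def by (intro set_integral_mono set_integral_add(1) i1 i2[unfolded C_def]) auto
  also have "\<dots> = 2 powr p * (LINT x:{s..v}|lborel. rearr \<Omega> g0 (x/2) powr p)
      + C * (LINT x:{s..v}|lborel. x powr (-(p/q)))"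
    using i1 i2 by (simp add: set_integral_add(2))
  also have "\<dots> \<le> 2 powr p * (2 * (gl_norm \<Omega> p \<alpha> g0 powr p * (1 - ln (s/2)) powr \<alpha>))
      + C * (v powr (1 - p/q) / (1 - p/q))"
    using s pq C0 set_integral_rearr_half_le_gl_norm[OF g0 pq(1), of s v] set_integral_Icc_powr_le[of s v "p/q"]
    by (intro add_mono mult_left_mono) auto
  also have "\<dots> = 2 powr (p+1) * gl_norm \<Omega> p \<alpha> g0 powr p * (1 - ln (s/2)) powr \<alpha>
      + 2 powr p * 2 powr (p/q) / (1 - p/q) * Lq_norm \<Omega> q g1 powr p * v powr (1 - p/q)"
    unfolding C_def by (simp add: powr_add)
  finally show ?thesis .
qed

lemma gl_fun_upto_le_decomp:
  assumes pq: "0 < p" "p < q" and "0 \<le> \<alpha>" and g0: "g0 \<in> GL \<Omega> p \<alpha>" and g1: "g1 \<in> Lq \<Omega> q"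
    and eq: "\<And>z. z \<in> \<Omega> \<Longrightarrow> f z = g0 z + g1 z" and s: "0 < s" "s < v" "v \<le> 1"
  shows "gl_fun_upto \<Omega> p \<alpha> f v s
    \<le> K_const_head p q \<alpha> * (gl_norm \<Omega> p \<alpha> g0 + psi p q \<alpha> v * Lq_norm \<Omega> q g1)"
proof -
  define G where "G = gl_norm \<Omega> p \<alpha> g0"
  define N where "N = Lq_norm \<Omega> q g1"
  define t where "t = psi p q \<alpha> v"
  define X where "X = (LINT x:{s..v}|lborel. rearr \<Omega> f x powr p)"
  define L where "L = 1 - ln s"
  define A1 where "A1 = 2 powr (p+1) * (1 + ln 2) powr \<alpha>"
  define A2 where "A2 = 2 powr p * 2 powr (p/q) / (1 - p/q)"
  have G0: "0 \<le> G" unfolding G_def by (rule gl_norm_nonneg[OF g0])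
  have N0: "0 \<le> N" unfolding N_def Lq_norm_def by simp
  have t0: "0 < t" unfolding t_def using s by (intro psi_pos) auto
  have L: "0 < L" unfolding L_def using s by (intro one_minus_ln_pos) auto
  have A0: "0 \<le> A1" "0 \<le> A2" unfolding A1_def A2_def using pq by auto
  have X0: "0 \<le> X" unfolding X_def by (intro set_integral_nonneg) simp
  have "L powr (-\<alpha>) * (1 - ln (s/2)) powr \<alpha> \<le> (1 + ln 2) powr \<alpha>"
    using one_minus_ln_divide_le[of s 2] one_minus_ln_pos[of "s/2"] s L \<open>0 \<le> \<alpha>\<close>
    unfolding L_def by (intro powr_neg_mult_powr_le) auto
  hence head: "L powr (-\<alpha>) * (2 powr (p+1) * G powr p * (1 - ln (s/2)) powr \<alpha>) \<le> A1 * G powr p"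
    unfolding A1_def by (simp add: mult_left_mono algebra_simps)
  have "L powr (-\<alpha>) * v powr (1 - p/q) \<le> t powr p"
    unfolding L_def t_def using s pq \<open>0 \<le> \<alpha>\<close> by (intro one_minus_ln_powr_mult_le_psi_powr) auto
  hence tail: "L powr (-\<alpha>) * (A2 * N powr p * v powr (1 - p/q)) \<le> A2 * (t * N) powr p"
    using A0 N0 by (simp add: powr_mult mult_left_mono algebra_simps)
  have "L powr (-\<alpha>/p * p) * X \<le> L powr (-\<alpha>) * (2 powr (p+1) * G powr p * (1 - ln (s/2)) powr \<alpha>
      + A2 * N powr p * v powr (1 - p/q))"
    using set_integral_rearr_head_le[OF pq g0 g1 eq s(1) less_imp_le[OF s(2)] s(3)] pq
    unfolding X_def G_def N_def A2_def by (simp add: mult_left_mono)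
  also have "\<dots> \<le> A1 * G powr p + A2 * (t * N) powr p"
    using head tail by (simp add: distrib_left)
  also have "\<dots> \<le> (A1 + A2) * (G + t * N) powr p"
    using G0 N0 t0 A0 pq by (simp add: distrib_right add_mono mult_left_mono powr_mono2)
  also have "\<dots> = (K_const_head p q \<alpha> * (G + t * N)) powr p"
    unfolding K_const_head_def A1_def[symmetric] A2_def[symmetric] using A0 pq
    by (simp add: powr_mult powr_powr)
  finally have "L powr (-\<alpha>/p) * X powr (1/p) \<le> K_const_head p q \<alpha> * (G + t * N)"
    using L X0 pq G0 N0 t0 by (intro powr_root_le) (auto simp: K_const_head_def)
  thus ?thesis unfolding gl_fun_upto_def L_def X_def G_def N_def t_def .
qed

lemma rearr_powr_le_gl_norm:
  assumes g: "g \<in> GL \<Omega> p \<alpha>" and u: "0 < u" "u \<le> 1" and p: "0 < p"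
  shows "u/2 * rearr \<Omega> g u powr p \<le> gl_norm \<Omega> p \<alpha> g powr p * (1 - ln (u/2)) powr \<alpha>"
proof -
  have gm: "meas_on \<Omega> g" using g unfolding GL_def by auto
  have "u/2 * rearr \<Omega> g u powr p = (LINT x:{u/2..u}|lborel. rearr \<Omega> g u powr p)"
    using u by (simp add: set_integral_const)
  also have "\<dots> \<le> (LINT x:{u/2..u}|lborel. rearr \<Omega> g x powr p)"
    using u p rearr_nonneg[OF gm u(1)] set_integrable_rearr_powr[OF gm _ p, of "u/2" 1 u]
      borel_integrable_atLeastAtMost'[OF continuous_on_const]
    by (intro set_integral_mono powr_mono2 rearr_antimono[OF gm]) auto
  also have "\<dots> \<le> (LINT x:{u/2..1}|lborel. rearr \<Omega> g x powr p)"
    using u set_integrable_rearr_powr[OF gm _ p, of "u/2" 1 1]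
    by (intro set_integral_Icc_subset_mono) auto
  also have "\<dots> \<le> gl_norm \<Omega> p \<alpha> g powr p * (1 - ln (u/2)) powr \<alpha>"
    using u p by (intro set_integral_rearr_le_gl_norm[OF g]) auto
  finally show ?thesis .
qed

lemma rearr_powr_le_decomp_tail:
  assumes pq: "0 < p" "p < q" and g0: "meas_on \<Omega> g0" and g1: "meas_on \<Omega> g1"
    and eq: "\<And>z. z \<in> \<Omega> \<Longrightarrow> f z = g0 z + g1 z" and v: "0 < v" "v \<le> x"
  shows "rearr \<Omega> f x powr q
    \<le> 2 powr q * rearr \<Omega> g0 (v/2) powr (q-p) * rearr \<Omega> g0 (x/2) powr p + 2 powr q * rearr \<Omega> g1 (x/2) powr q"
proof -
  have x: "0 < x" using v by simp
  have a0: "0 \<le> rearr \<Omega> g0 (x/2)" and b0: "0 \<le> rearr \<Omega> g1 (x/2)"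
    using rearr_nonneg[OF g0, of "x/2"] rearr_nonneg[OF g1, of "x/2"] x by auto
  have "rearr \<Omega> f x powr q \<le> (rearr \<Omega> g0 (x/2) + rearr \<Omega> g1 (x/2)) powr q"
    using rearr_le_half_add[OF g0 g1 eq x] rearr_nonneg[OF meas_on_sum[OF g0 g1 eq] x] pq
    by (intro powr_mono2) auto
  also have "\<dots> \<le> 2 powr q * (rearr \<Omega> g0 (x/2) powr q + rearr \<Omega> g1 (x/2) powr q)"
    using a0 b0 pq by (intro powr_add_le_two_powr) auto
  also have "rearr \<Omega> g0 (x/2) powr q = rearr \<Omega> g0 (x/2) powr (q-p) * rearr \<Omega> g0 (x/2) powr p"
    by (simp add: powr_add[symmetric])
  also have "\<dots> \<le> rearr \<Omega> g0 (v/2) powr (q-p) * rearr \<Omega> g0 (x/2) powr p"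
    using a0 pq v by (intro mult_right_mono powr_mono2 rearr_antimono[OF g0]) auto
  finally show ?thesis by (simp add: algebra_simps mult_left_mono)
qed

lemma set_integral_rearr_tail_le:
  assumes pq: "0 < p" "p < q" and g0: "g0 \<in> GL \<Omega> p \<alpha>" and g1: "g1 \<in> Lq \<Omega> q"
    and eq: "\<And>z. z \<in> \<Omega> \<Longrightarrow> f z = g0 z + g1 z" and v: "0 < v" "v \<le> 1"
  shows "(LINT x:{v..1}|lborel. rearr \<Omega> f x powr q)
    \<le> 2 powr (q+1) * (rearr \<Omega> g0 (v/2) powr (q-p) * gl_norm \<Omega> p \<alpha> g0 powr p * (1 - ln (v/2)) powr \<alpha>
        + Lq_norm \<Omega> q g1 powr q)"
proof -
  define M where "M = rearr \<Omega> g0 (v/2)"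
  have g0m: "meas_on \<Omega> g0" and g1m: "meas_on \<Omega> g1" using g0 g1 unfolding GL_def Lq_def by auto
  have q0: "0 < q" using pq by simp
  have i0: "set_integrable lborel {v..1} (\<lambda>x. 2 powr q * M powr (q-p) * rearr \<Omega> g0 (x/2) powr p)"
    using set_integrable_rearr_powr[OF g0m v(1) pq(1), of 2] by simp
  have i1: "set_integrable lborel {v..1} (\<lambda>x. 2 powr q * rearr \<Omega> g1 (x/2) powr q)"
    using set_integrable_rearr_powr[OF g1m v(1) q0, of 2] by simp
  have "(LINT x:{v..1}|lborel. rearr \<Omega> f x powr q)
      \<le> (LINT x:{v..1}|lborel. 2 powr q * M powr (q-p) * rearr \<Omega> g0 (x/2) powr p
                               + 2 powr q * rearr \<Omega> g1 (x/2) powr q)"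
    using rearr_powr_le_decomp_tail[OF pq g0m g1m eq v(1)]
      set_integrable_rearr_powr[OF meas_on_sum[OF g0m g1m eq] v(1) q0, of 1]
    unfolding M_def by (intro set_integral_mono set_integral_add(1) i0[unfolded M_def] i1) auto
  also have "\<dots> = 2 powr q * M powr (q-p) * (LINT x:{v..1}|lborel. rearr \<Omega> g0 (x/2) powr p)
      + 2 powr q * (LINT x:{v..1}|lborel. rearr \<Omega> g1 (x/2) powr q)"
    using i0 i1 by (simp add: set_integral_add(2))
  also have "\<dots> \<le> 2 powr q * M powr (q-p) * (2 * (gl_norm \<Omega> p \<alpha> g0 powr p * (1 - ln (v/2)) powr \<alpha>))
        + 2 powr q * (2 * Lq_norm \<Omega> q g1 powr q)"
    using v pq set_integral_rearr_half_le_gl_norm[OF g0 pq(1), of v 1]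
      set_integral_rearr_half_le_Lq_norm[OF g1 q0, of v 1]
    by (intro add_mono mult_left_mono) auto
  finally show ?thesis unfolding M_def by (simp add: powr_add algebra_simps)
qed

text \<open>This is where the choice of \<open>psi\<close> enters: multiplying by \<open>psi v ^ q\<close> cancels the powers of
  \<open>v\<close> and of \<open>1 - ln v\<close> produced by the bound on \<open>rearr \<Omega> g (v/2)\<close>.\<close>

lemma psi_powr_rearr_le_gl_norm:
  assumes pq: "0 < p" "p < q" and al: "0 \<le> \<alpha>" and g: "g \<in> GL \<Omega> p \<alpha>" and v: "0 < v" "v \<le> 1"
  shows "psi p q \<alpha> v powr q * (rearr \<Omega> g (v/2) powr (q-p) * gl_norm \<Omega> p \<alpha> g powr p * (1 - ln (v/4)) powr \<alpha>)
    \<le> 4 powr ((q-p)/p) * (1 + ln 4) powr (\<alpha>*q/p) * gl_norm \<Omega> p \<alpha> g powr q"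
proof -
  define G where "G = gl_norm \<Omega> p \<alpha> g"
  define L where "L = 1 - ln (v/4)"
  define e where "e = (q-p)/p"
  define B where "B = 4 * G powr p * L powr \<alpha> / v"
  have L0: "0 < L" unfolding L_def using v one_minus_ln_pos[of "v/4"] by simp
  have e0: "0 < e" unfolding e_def using pq by simp
  have "rearr \<Omega> g (v/2) powr p \<le> B"
    using rearr_powr_le_gl_norm[OF g, of "v/2"] v pq
    unfolding B_def G_def[symmetric] L_def by (simp add: field_simps)
  hence "(rearr \<Omega> g (v/2) powr p) powr e \<le> B powr e" using e0 by (intro powr_mono2) auto
  hence "rearr \<Omega> g (v/2) powr (q-p) \<le> B powr e" unfolding e_def using pq by (simp add: powr_powr)
  hence "psi p q \<alpha> v powr q * (rearr \<Omega> g (v/2) powr (q-p) * G powr p * L powr \<alpha>)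
      \<le> psi p q \<alpha> v powr q * (B powr e * G powr p * L powr \<alpha>)"
    by (intro mult_left_mono mult_right_mono) auto
  also have "\<dots> = 4 powr e * G powr q * (L powr (\<alpha>*q/p) * (1 - ln v) powr (-(\<alpha>*q/p)))"
  proof -
    have "(1/p - 1/q) * q = e" "-\<alpha>/p * q = -(\<alpha>*q/p)" unfolding e_def using pq by (simp_all add: field_simps)
    hence tq: "psi p q \<alpha> v powr q = v powr e * (1 - ln v) powr (-(\<alpha>*q/p))"
      unfolding psi_def using v one_minus_ln_pos[of v] by (simp add: powr_mult powr_powr)
    have "p * e + p = q" "\<alpha> * e + \<alpha> = \<alpha>*q/p" unfolding e_def using pq by (simp_all add: field_simps)
    hence GL: "G powr (p*e) * G powr p = G powr q" "L powr (\<alpha>*e) * L powr \<alpha> = L powr (\<alpha>*q/p)"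
      by (simp_all add: powr_add[symmetric])
    have "B powr e = 4 powr e * G powr (p*e) * L powr (\<alpha>*e) / v powr e"
      unfolding B_def by (simp add: powr_mult powr_divide powr_powr)
    hence "psi p q \<alpha> v powr q * (B powr e * G powr p * L powr \<alpha>)
      = 4 powr e * (G powr (p*e) * G powr p) * (L powr (\<alpha>*e) * L powr \<alpha>) * (1 - ln v) powr (-(\<alpha>*q/p))
        * (v powr e / v powr e)"
      unfolding tq by (simp add: field_simps)
    thus ?thesis unfolding GL using v by simp
  qed
  also have "\<dots> \<le> 4 powr e * G powr q * (1 + ln 4) powr (\<alpha>*q/p)"
  proof -
    have "(1 - ln v) powr (-(\<alpha>*q/p)) * L powr (\<alpha>*q/p) \<le> (1 + ln 4) powr (\<alpha>*q/p)"
      using one_minus_ln_divide_le[of v 4] v L0 one_minus_ln_pos[of v] al pq unfolding L_def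
      by (intro powr_neg_mult_powr_le) auto
    thus ?thesis by (simp add: mult.commute mult_left_mono)
  qed
  finally show ?thesis unfolding G_def L_def e_def by (simp add: ac_simps)
qed

lemma Lq_tail_le_decomp:
  assumes pq: "0 < p" "p < q" and al: "0 \<le> \<alpha>" and g0: "g0 \<in> GL \<Omega> p \<alpha>" and g1: "g1 \<in> Lq \<Omega> q"
    and eq: "\<And>z. z \<in> \<Omega> \<Longrightarrow> f z = g0 z + g1 z" and v: "0 < v" "v \<le> 1"
  shows "psi p q \<alpha> v * Lq_tail \<Omega> q f v
    \<le> K_const_tail p q \<alpha> * (gl_norm \<Omega> p \<alpha> g0 + psi p q \<alpha> v * Lq_norm \<Omega> q g1)"
proof -
  define G where "G = gl_norm \<Omega> p \<alpha> g0"
  define N where "N = Lq_norm \<Omega> q g1"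
  define t where "t = psi p q \<alpha> v"
  define Y where "Y = (LINT x:{v..1}|lborel. rearr \<Omega> f x powr q)"
  define H where "H = rearr \<Omega> g0 (v/2) powr (q-p) * G powr p * (1 - ln (v/4)) powr \<alpha>"
  define C where "C = 2 powr (q+1) * 4 powr ((q-p)/p) * (1 + ln 4) powr (\<alpha>*q/p)"
  have G0: "0 \<le> G" unfolding G_def by (rule gl_norm_nonneg[OF g0])
  have N0: "0 \<le> N" unfolding N_def Lq_norm_def by simp
  have t0: "0 < t" unfolding t_def using v by (intro psi_pos) auto
  have q0: "0 < q" using pq by simp
  have Y0: "0 \<le> Y" unfolding Y_def by (intro set_integral_nonneg) simp
  have "(1 - ln (v/2)) powr \<alpha> \<le> (1 - ln (v/4)) powr \<alpha>"
    using one_minus_ln_pos[of "v/2"] v al by (intro powr_mono2) (auto simp: ln_div)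
  hence "2 powr (q+1) * (rearr \<Omega> g0 (v/2) powr (q-p) * G powr p * (1 - ln (v/2)) powr \<alpha> + N powr q)
      \<le> 2 powr (q+1) * (H + N powr q)"
    unfolding H_def by (intro mult_left_mono add_right_mono) auto
  with set_integral_rearr_tail_le[OF pq g0 g1 eq v] have "Y \<le> 2 powr (q+1) * (H + N powr q)"
    unfolding Y_def G_def N_def by linarith
  hence "t powr (1 * q) * Y \<le> t powr q * (2 powr (q+1) * (H + N powr q))" by (simp add: mult_left_mono)
  also have "\<dots> = 2 powr (q+1) * (t powr q * H) + 2 powr (q+1) * (t * N) powr q"
    using t0 N0 by (simp add: powr_mult algebra_simps)
  also have "\<dots> \<le> C * G powr q + 2 powr (q+1) * (t * N) powr q"
    using psi_powr_rearr_le_gl_norm[OF pq al g0 v] unfolding C_def H_def G_def t_def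
    by (simp add: ac_simps)
  also have "\<dots> \<le> (C + 2 powr (q+1)) * (G + t * N) powr q"
    using G0 N0 t0 q0 unfolding C_def distrib_right by (intro add_mono mult_left_mono powr_mono2) auto
  also have "\<dots> = (K_const_tail p q \<alpha> * (G + t * N)) powr q"
    unfolding K_const_tail_def C_def using q0 by (simp add: powr_mult powr_powr)
  finally have "t powr 1 * Y powr (1/q) \<le> K_const_tail p q \<alpha> * (G + t * N)"
    using t0 Y0 q0 G0 N0 by (intro powr_root_le) (auto simp: K_const_tail_def)
  hence "t * Y powr (1/q) \<le> K_const_tail p q \<alpha> * (G + t * N)" using t0 by simp
  thus ?thesis unfolding Lq_tail_def Y_def G_def N_def t_def .
qed

subsection \<open>Upper bound via truncation\<close>

lemma
  assumes "meas_on \<Omega> f"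
  shows meas_on_truncate_at: "meas_on \<Omega> (truncate_at l f)"
    and meas_on_truncation_excess: "meas_on \<Omega> (\<lambda>z. f z - truncate_at l f z)"
proof -
  have "f \<in> borel_measurable (restrict_space lebesgue \<Omega>)" using assms meas_on_iff_restrict by blast
  hence "truncate_at l f \<in> borel_measurable (restrict_space lebesgue \<Omega>)"
    unfolding truncate_at_def[abs_def] by measurable
  moreover from this have "(\<lambda>z. f z - truncate_at l f z) \<in> borel_measurable (restrict_space lebesgue \<Omega>)"
    using \<open>f \<in> _\<close> by measurable
  ultimately show "meas_on \<Omega> (truncate_at l f)" "meas_on \<Omega> (\<lambda>z. f z - truncate_at l f z)"
    using meas_on_iff_restrict by blast+
qed

context
  fixes f :: "'a \<Rightarrow> real" and v :: real
  assumes f: "meas_on \<Omega> f" and v: "0 < v" "v < 1"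
begin

lemma rearr_truncation_excess_eq_zero:
  assumes "v \<le> x"
  shows "rearr \<Omega> (\<lambda>z. f z - truncate_at (rearr \<Omega> f v) f z) x = 0"
proof -
  let ?l = "rearr \<Omega> f v" and ?g = "\<lambda>z. f z - truncate_at (rearr \<Omega> f v) f z"
  have "{z\<in>\<Omega>. 0 < \<bar>?g z\<bar>} \<subseteq> {z\<in>\<Omega>. ?l < \<bar>f z\<bar>}"
    by (auto simp: truncate_at_def max_def min_def)
  hence "level_measure ?g 0 \<le> level_measure f ?l"
    unfolding level_measure_def by (intro emeasure_mono sets_level[OF f])
  also have "\<dots> \<le> ennreal x"
    using level_measure_rearr_le[OF f v(1)] ennreal_leI[OF assms] by (rule order.trans)
  finally have "rearr \<Omega> ?g x \<le> 0" by (intro rearr_le_of_level_measure_le) auto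
  thus ?thesis using rearr_nonneg[OF meas_on_truncation_excess[OF f, of ?l], of x] assms v by simp
qed

lemma truncation_excess_GL:
  assumes p: "0 < p" and bdd: "bdd_above (gl_fun_upto \<Omega> p \<alpha> f v ` {0<..<v})"
  defines "g \<equiv> \<lambda>z. f z - truncate_at (rearr \<Omega> f v) f z"
  shows "g \<in> GL \<Omega> p \<alpha>" and "gl_norm \<Omega> p \<alpha> g \<le> (SUP s\<in>{0<..<v}. gl_fun_upto \<Omega> p \<alpha> f v s)"
proof -
  define A where "A = (SUP s\<in>{0<..<v}. gl_fun_upto \<Omega> p \<alpha> f v s)"
  have gm: "meas_on \<Omega> g" unfolding g_def by (rule meas_on_truncation_excess[OF f])
  have upto_le: "gl_fun_upto \<Omega> p \<alpha> f v s \<le> A" if "s \<in> {0<..<v}" for s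
    unfolding A_def using bdd that by (intro cSUP_upper) auto
  have A0: "0 \<le> A"
    using upto_le[of "v/2"] v by (auto simp: gl_fun_upto_def intro: order.trans[rotated])
  have "\<bar>g z\<bar> \<le> \<bar>f z\<bar>" for z
    unfolding g_def truncate_at_def using rearr_nonneg[OF f v(1)] by (auto simp: max_def min_def)
  hence rearr_le: "rearr \<Omega> g x \<le> rearr \<Omega> f x" if "0 < x" for x using rearr_mono[OF gm f that] by blast
  have vanish: "(LINT x:{v..1}|lborel. rearr \<Omega> g x powr p) = 0"
    using rearr_truncation_excess_eq_zero p unfolding g_def[symmetric]
    by (subst set_lebesgue_integral_cong[where g="\<lambda>_. 0"]) auto
  have "gl_fun \<Omega> p \<alpha> g s \<le> A" if s: "s \<in> {0<..<1}" for s
  proof (cases "s < v")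
    case True
    have "(LINT x:{s..1}|lborel. rearr \<Omega> g x powr p)
        = (LINT x:{s..v}|lborel. rearr \<Omega> g x powr p) + (LINT x:{v..1}|lborel. rearr \<Omega> g x powr p)"
      using True v s set_integrable_rearr_powr[OF gm _ p, of s 1 1] by (intro set_integral_Icc_split) auto
    also have "\<dots> = (LINT x:{s..v}|lborel. rearr \<Omega> g x powr p)" unfolding vanish by simp
    also have "\<dots> \<le> (LINT x:{s..v}|lborel. rearr \<Omega> f x powr p)"
      using s p rearr_le
        set_integrable_rearr_powr[OF gm _ p, of s 1 v] set_integrable_rearr_powr[OF f _ p, of s 1 v]
      by (intro set_integral_mono powr_mono2 rearr_nonneg[OF gm]) auto
    finally have "gl_fun \<Omega> p \<alpha> g s \<le> gl_fun_upto \<Omega> p \<alpha> f v s"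
      unfolding gl_fun_def gl_fun_upto_def using p
      by (intro mult_left_mono powr_mono2) (auto intro!: set_integral_nonneg)
    thus ?thesis using upto_le True s by force
  next
    case False
    have "(LINT x:{s..1}|lborel. rearr \<Omega> g x powr p) = 0"
      using rearr_truncation_excess_eq_zero p False unfolding g_def[symmetric]
      by (subst set_lebesgue_integral_cong[where g="\<lambda>_. 0"]) auto
    thus ?thesis using A0 p by (simp add: gl_fun_def)
  qed
  thus "g \<in> GL \<Omega> p \<alpha>" "gl_norm \<Omega> p \<alpha> g \<le> A"
    unfolding GL_def gl_norm_def using gm by (auto intro!: bdd_aboveI2[where M=A] cSUP_least)
qed

lemma truncate_at_Lq: "0 < q \<Longrightarrow> truncate_at (rearr \<Omega> f v) f \<in> Lq \<Omega> q"
  using rearr_nonneg[OF f v(1)] abs_truncate_at_le(2)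
  by (intro bounded_Lq[OF meas_on_truncate_at[OF f], of "rearr \<Omega> f v"]) auto

lemma Lq_norm_truncate_at_powr_le:
  assumes q: "0 < q"
  shows "Lq_norm \<Omega> q (truncate_at (rearr \<Omega> f v) f) powr q
    \<le> v * rearr \<Omega> f v powr q + (LINT x:{v..1}|lborel. rearr \<Omega> f x powr q)"
proof -
  define l where "l = rearr \<Omega> f v"
  define g where "g = truncate_at l f"
  define Y where "Y = (LINT x:{v..1}|lborel. rearr \<Omega> f x powr q)"
  have l0: "0 \<le> l" unfolding l_def using rearr_nonneg[OF f v(1)] .
  have gm: "meas_on \<Omega> g" unfolding g_def by (rule meas_on_truncate_at[OF f])
  have Y0: "0 \<le> Y" unfolding Y_def by (intro set_integral_nonneg) simp
  have iY: "set_integrable lborel {v..1} (\<lambda>x. rearr \<Omega> f x powr q)"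
    using set_integrable_rearr_powr[OF f v(1) q, of 1] by simp
  have "ennreal (Lq_norm \<Omega> q g powr q) = (\<integral>\<^sup>+z. ennreal (\<bar>g z\<bar> powr q) * indicator \<Omega> z \<partial>lebesgue)"
    unfolding g_def l_def by (rule Lq_norm_powr_eq_nn_integral[OF truncate_at_Lq[OF q] q])
  also have "\<dots> = (\<integral>\<^sup>+x. ennreal (rearr \<Omega> g x powr q) * indicator {0<..<1} x \<partial>lborel)"
    by (rule nn_integral_rearr[OF gm, of "\<lambda>y. ennreal (y powr q)"]) measurable
  also have "\<dots> \<le> (\<integral>\<^sup>+x. ennreal (l powr q) * indicator {0<..<v} x
                        + ennreal (rearr \<Omega> f x powr q) * indicator {v..1} x \<partial>lborel)"
  proof (intro nn_integral_mono)
    fix x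
    have "rearr \<Omega> g x powr q \<le> l powr q" if "0 < x"
      using rearr_le_bound[OF l0 abs_truncate_at_le(2)[OF l0, of f]] rearr_nonneg[OF gm that] q that
      unfolding g_def by (intro powr_mono2) auto
    moreover have "rearr \<Omega> g x powr q \<le> rearr \<Omega> f x powr q" if "0 < x"
      using rearr_mono[OF gm f that] abs_truncate_at_le(1)[OF l0, of f] rearr_nonneg[OF gm that] q
      unfolding g_def by (intro powr_mono2) auto
    ultimately show "ennreal (rearr \<Omega> g x powr q) * indicator {0<..<1} x
        \<le> ennreal (l powr q) * indicator {0<..<v} x + ennreal (rearr \<Omega> f x powr q) * indicator {v..1} x"
      by (auto simp: indicator_def)
  qed
  also have "\<dots> = (\<integral>\<^sup>+x. ennreal (l powr q) * indicator {0<..<v} x \<partial>lborel)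
                  + (\<integral>\<^sup>+x. ennreal (rearr \<Omega> f x powr q) * indicator {v..1} x \<partial>lborel)"
    by (rule nn_integral_add) (use set_integrable_borel_measurable_ennreal[OF iY] in auto)
  also have "\<dots> = ennreal (v * l powr q + Y)"
    unfolding Y_def using v Y0[unfolded Y_def] ennreal_set_integral_eq_nn_integral[OF iY]
    by (simp add: nn_integral_cmult_indicator ennreal_mult[symmetric] mult.commute ennreal_plus)
  finally show ?thesis unfolding g_def l_def Y_def[symmetric] using v Y0 by (subst (asm) ennreal_le_iff) auto
qed

lemma Lq_norm_truncate_at_le:
  assumes q: "1 \<le> q"
  shows "Lq_norm \<Omega> q (truncate_at (rearr \<Omega> f v) f) \<le> 2 * (v powr (1/q) * rearr \<Omega> f v + Lq_tail \<Omega> q f v)"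
proof -
  define N where "N = Lq_norm \<Omega> q (truncate_at (rearr \<Omega> f v) f)"
  define l where "l = rearr \<Omega> f v"
  define Y where "Y = (LINT x:{v..1}|lborel. rearr \<Omega> f x powr q)"
  have l0: "0 \<le> l" unfolding l_def using rearr_nonneg[OF f v(1)] .
  have "0 \<le> N" unfolding N_def Lq_norm_def by simp
  hence "N = (N powr q) powr (1/q)" using q by (simp add: powr_powr)
  also have "\<dots> \<le> (v * l powr q + Y) powr (1/q)"
    using Lq_norm_truncate_at_powr_le q unfolding N_def l_def Y_def by (intro powr_mono2) auto
  also have "\<dots> \<le> 2 * ((v * l powr q) powr (1/q) + Y powr (1/q))"
    using v q unfolding Y_def by (intro powr_add_le_two_mult set_integral_nonneg) auto
  also have "(v * l powr q) powr (1/q) = v powr (1/q) * l"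
    using l0 q by (simp add: powr_mult powr_powr)
  finally show ?thesis unfolding N_def l_def Y_def Lq_tail_def .
qed

lemma rearr_le_gl_fun_upto:
  assumes p: "0 < p"
  shows "(1 - ln (v/2)) powr (-\<alpha>/p) * ((v/2) powr (1/p) * rearr \<Omega> f v) \<le> gl_fun_upto \<Omega> p \<alpha> f v (v/2)"
proof -
  define l where "l = rearr \<Omega> f v"
  have l0: "0 \<le> l" unfolding l_def using rearr_nonneg[OF f v(1)] .
  have "(v/2) * l powr p = (LINT x:{v/2..v}|lborel. l powr p)" using v by (simp add: set_integral_const)
  also have "\<dots> \<le> (LINT x:{v/2..v}|lborel. rearr \<Omega> f x powr p)"
    unfolding l_def using v p l0[unfolded l_def] set_integrable_rearr_powr[OF f _ p, of "v/2" 1 v]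
      borel_integrable_atLeastAtMost'[OF continuous_on_const]
    by (intro set_integral_mono powr_mono2 rearr_antimono[OF f]) auto
  finally have "((v/2) * l powr p) powr (1/p) \<le> (LINT x:{v/2..v}|lborel. rearr \<Omega> f x powr p) powr (1/p)"
    using v p l0 by (intro powr_mono2) auto
  moreover have "((v/2) * l powr p) powr (1/p) = (v/2) powr (1/p) * (l powr p) powr (1/p)"
    by (rule powr_mult)
  moreover have "(l powr p) powr (1/p) = l" using p l0 by (simp add: powr_powr)
  ultimately show ?thesis unfolding gl_fun_upto_def l_def by (intro mult_left_mono) auto
qed

lemma psi_root_rearr_le_gl_fun_upto:
  assumes p: "0 < p" and al: "0 \<le> \<alpha>"
  shows "psi p q \<alpha> v * (v powr (1/q) * rearr \<Omega> f v)
    \<le> 2 powr (1/p) * (1 + ln 2) powr (\<alpha>/p) * gl_fun_upto \<Omega> p \<alpha> f v (v/2)"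
proof -
  define D where "D = 2 powr (1/p) * (1 + ln 2) powr (\<alpha>/p)"
  have "psi p q \<alpha> v * (v powr (1/q) * rearr \<Omega> f v)
      \<le> D * ((1 - ln (v/2)) powr (-\<alpha>/p) * (v/2) powr (1/p)) * rearr \<Omega> f v"
    using psi_root_le[OF p al v] rearr_nonneg[OF f v(1)] unfolding D_def
    by (simp add: mult.assoc[symmetric] mult_right_mono)
  also have "\<dots> \<le> D * gl_fun_upto \<Omega> p \<alpha> f v (v/2)"
    using rearr_le_gl_fun_upto[OF p, of \<alpha>] unfolding D_def by (simp add: mult.assoc mult_left_mono)
  finally show ?thesis unfolding D_def .
qed

lemma Kfun_le_truncation_bound:
  assumes pq: "0 < p" "1 \<le> q" and al: "0 \<le> \<alpha>"
    and bdd: "bdd_above (gl_fun_upto \<Omega> p \<alpha> f v ` {0<..<v})"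
  shows "Kfun \<Omega> p \<alpha> q f (psi p q \<alpha> v)
    \<le> K_const_upper p \<alpha> * ((SUP s\<in>{0<..<v}. gl_fun_upto \<Omega> p \<alpha> f v s) + psi p q \<alpha> v * Lq_tail \<Omega> q f v)"
proof -
  define A where "A = (SUP s\<in>{0<..<v}. gl_fun_upto \<Omega> p \<alpha> f v s)"
  define T where "T = Lq_tail \<Omega> q f v"
  define t where "t = psi p q \<alpha> v"
  define l where "l = rearr \<Omega> f v"
  define g0 where "g0 = (\<lambda>z. f z - truncate_at l f z)"
  define g1 where "g1 = truncate_at l f"
  define D where "D = 2 powr (1/p) * (1 + ln 2) powr (\<alpha>/p)"
  have t0: "0 < t" unfolding t_def using v by (intro psi_pos) auto
  have D0: "0 \<le> D" unfolding D_def by simp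
  have T0: "0 \<le> T" unfolding T_def Lq_tail_def by simp
  have upto_le_A: "gl_fun_upto \<Omega> p \<alpha> f v (v/2) \<le> A"
    unfolding A_def using bdd v by (intro cSUP_upper) auto
  hence A0: "0 \<le> A" unfolding gl_fun_upto_def by (meson mult_nonneg_nonneg order_trans powr_ge_zero)
  have g0: "g0 \<in> GL \<Omega> p \<alpha>" "gl_norm \<Omega> p \<alpha> g0 \<le> A"
    unfolding g0_def l_def A_def using truncation_excess_GL[OF pq(1) bdd] by auto
  have g1: "g1 \<in> Lq \<Omega> q" "Lq_norm \<Omega> q g1 \<le> 2 * (v powr (1/q) * l + T)"
    unfolding g1_def l_def T_def using truncate_at_Lq Lq_norm_truncate_at_le pq by auto
  have tl: "t * (v powr (1/q) * l) \<le> D * A"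
    using psi_root_rearr_le_gl_fun_upto[OF pq(1) al] upto_le_A D0 unfolding t_def l_def D_def
    by (meson mult_left_mono order_trans)
  have "(g0, g1) \<in> decomps \<Omega> p \<alpha> q f" using g0 g1 unfolding decomps_def g0_def g1_def by auto
  hence "Kfun \<Omega> p \<alpha> q f t \<le> gl_norm \<Omega> p \<alpha> g0 + t * Lq_norm \<Omega> q g1"
    using t0 by (intro Kfun_le_decomp) auto
  also have "\<dots> \<le> A + t * (2 * (v powr (1/q) * l + T))"
    using g0(2) g1(2) t0 by (intro add_mono mult_left_mono) auto
  also have "\<dots> \<le> A + 2 * (D * A) + 2 * (t * T)"
    using tl by (simp add: algebra_simps)
  also have "\<dots> \<le> K_const_upper p \<alpha> * (A + t * T)"
    unfolding K_const_upper_def D_def[symmetric] using A0 D0 T0 t0 by (simp add: algebra_simps)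
  finally show ?thesis unfolding A_def T_def t_def .
qed

end

lemma
  assumes pq: "0 < p" "p < q" and al: "0 \<le> \<alpha>" and f: "f \<in> GL_plus_Lq \<Omega> p \<alpha> q" and v: "0 < v" "v < 1"
  shows bdd_above_gl_fun_upto: "bdd_above (gl_fun_upto \<Omega> p \<alpha> f v ` {0<..<v})"
    and holmstedt_le_Kfun:
      "holmstedt \<Omega> p \<alpha> q f v \<le> (K_const_head p q \<alpha> + K_const_tail p q \<alpha>) * Kfun \<Omega> p \<alpha> q f (psi p q \<alpha> v)"
proof -
  define t where "t = psi p q \<alpha> v"
  define V where "V = (\<lambda>g. gl_norm \<Omega> p \<alpha> (fst g) + t * Lq_norm \<Omega> q (snd g))"
  define D where "D = decomps \<Omega> p \<alpha> q f"
  have bound: "holmstedt \<Omega> p \<alpha> q f v \<le> (K_const_head p q \<alpha> + K_const_tail p q \<alpha>) * V g"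
    and bdd: "bdd_above (gl_fun_upto \<Omega> p \<alpha> f v ` {0<..<v})" if gD: "g \<in> D" for g
  proof -
    obtain g0 g1 where g: "g = (g0, g1)" "g0 \<in> GL \<Omega> p \<alpha>" "g1 \<in> Lq \<Omega> q" "\<And>z. z \<in> \<Omega> \<Longrightarrow> f z = g0 z + g1 z"
      using gD by (cases g) (auto simp: D_def decomps_def)
    have head: "gl_fun_upto \<Omega> p \<alpha> f v s \<le> K_const_head p q \<alpha> * V g" if "s \<in> {0<..<v}" for s
      unfolding V_def t_def g(1) using gl_fun_upto_le_decomp[OF pq al g(2-4)] that v by simp
    thus "bdd_above (gl_fun_upto \<Omega> p \<alpha> f v ` {0<..<v})" by (intro bdd_aboveI2) 
    hence "(SUP s\<in>{0<..<v}. gl_fun_upto \<Omega> p \<alpha> f v s) \<le> K_const_head p q \<alpha> * V g"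
      using head v by (intro cSUP_least) auto
    moreover have "t * Lq_tail \<Omega> q f v \<le> K_const_tail p q \<alpha> * V g"
      unfolding V_def t_def g(1) using Lq_tail_le_decomp[OF pq al g(2-4)] v by simp
    ultimately show "holmstedt \<Omega> p \<alpha> q f v \<le> (K_const_head p q \<alpha> + K_const_tail p q \<alpha>) * V g"
      unfolding holmstedt_def t_def by (simp add: distrib_right)
  qed
  have "D \<noteq> {}" using f unfolding GL_plus_Lq_def D_def by simp
  thus "bdd_above (gl_fun_upto \<Omega> p \<alpha> f v ` {0<..<v})" using bdd by auto
  have C0: "0 < K_const_head p q \<alpha> + K_const_tail p q \<alpha>"
    using K_const_head_pos[OF pq] K_const_tail_nonneg by (rule add_pos_nonneg)
  have "holmstedt \<Omega> p \<alpha> q f v / (K_const_head p q \<alpha> + K_const_tail p q \<alpha>) \<le> (INF g\<in>D. V g)"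
    using \<open>D \<noteq> {}\<close> bound C0 by (intro cINF_greatest) (auto simp: pos_divide_le_eq mult.commute)
  thus "holmstedt \<Omega> p \<alpha> q f v \<le> (K_const_head p q \<alpha> + K_const_tail p q \<alpha>) * Kfun \<Omega> p \<alpha> q f (psi p q \<alpha> v)"
    unfolding Kfun_def D_def[symmetric] V_def t_def using C0 by (simp add: pos_divide_le_eq mult.commute)
qed

lemma Kfun_le_holmstedt:
  assumes pq: "0 < p" "p < q" "1 \<le> q" and al: "0 \<le> \<alpha>" and f: "f \<in> GL_plus_Lq \<Omega> p \<alpha> q" and v: "0 < v" "v < 1"
  shows "Kfun \<Omega> p \<alpha> q f (psi p q \<alpha> v) \<le> K_const_upper p \<alpha> * holmstedt \<Omega> p \<alpha> q f v"
proof -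
  from f obtain g0 g1 where "(g0, g1) \<in> decomps \<Omega> p \<alpha> q f" unfolding GL_plus_Lq_def by auto
  hence "meas_on \<Omega> f" unfolding decomps_def GL_def Lq_def by (auto intro: meas_on_sum)
  thus ?thesis unfolding holmstedt_def using pq v al
    by (intro Kfun_le_truncation_bound bdd_above_gl_fun_upto[OF pq(1,2) al f v]) auto
qed

lemma K_functional_equivalence:
  assumes pq: "0 < p" "p < q" "1 \<le> q" and al: "0 \<le> \<alpha>"
  shows "\<exists>c>0. \<forall>f\<in>GL_plus_Lq \<Omega> p \<alpha> q. \<forall>v\<in>{0<..<1}.
    Kfun \<Omega> p \<alpha> q f (psi p q \<alpha> v) \<le> c * holmstedt \<Omega> p \<alpha> q f v
    \<and> holmstedt \<Omega> p \<alpha> q f v \<le> c * Kfun \<Omega> p \<alpha> q f (psi p q \<alpha> v)"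
proof (intro exI[of _ "K_const_upper p \<alpha> + K_const_head p q \<alpha> + K_const_tail p q \<alpha>"] conjI ballI)
  define c where "c = K_const_upper p \<alpha> + K_const_head p q \<alpha> + K_const_tail p q \<alpha>"
  have c: "0 < K_const_upper p \<alpha>" "K_const_upper p \<alpha> \<le> c" "K_const_head p q \<alpha> + K_const_tail p q \<alpha> \<le> c"
    using K_const_upper_pos[of p \<alpha>] K_const_head_pos[OF pq(1,2), of \<alpha>]
      K_const_tail_nonneg[of p q \<alpha>] unfolding c_def by auto
  thus "0 < c" by simp
  fix f :: "'a \<Rightarrow> real" and v :: real
  assume f: "f \<in> GL_plus_Lq \<Omega> p \<alpha> q" and "v \<in> {0<..<1}"
  hence v: "0 < v" "v < 1" by auto
  have K: "0 \<le> Kfun \<Omega> p \<alpha> q f (psi p q \<alpha> v)" using v by (intro Kfun_nonneg[OF f] less_imp_le psi_pos) auto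
  note upper = Kfun_le_holmstedt[OF pq al f v] and lower = holmstedt_le_Kfun[OF pq(1,2) al f v]
  have "0 \<le> K_const_upper p \<alpha> * holmstedt \<Omega> p \<alpha> q f v" using K upper by linarith
  hence "0 \<le> holmstedt \<Omega> p \<alpha> q f v" using c(1) by (simp add: zero_le_mult_iff)
  thus "Kfun \<Omega> p \<alpha> q f (psi p q \<alpha> v) \<le> c * holmstedt \<Omega> p \<alpha> q f v"
    "holmstedt \<Omega> p \<alpha> q f v \<le> c * Kfun \<Omega> p \<alpha> q f (psi p q \<alpha> v)"
    using upper lower K c by (meson mult_right_mono order_trans)+
qed

end

theorem theorem3p2:
  fixes \<Omega> :: "'a::euclidean_space set" and p q \<alpha> :: real
  assumes "bounded \<Omega>" and "open \<Omega>" and "emeasure lebesgue \<Omega> = 1"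
    and "1 < p" and "p < q" and "0 < \<alpha>"
  shows "\<exists>c>0. \<forall>f\<in>GL_plus_Lq \<Omega> p \<alpha> q. \<forall>t\<in>{0<..<1::real}.
     (let R = (SUP s\<in>{0<..<phi p q \<alpha> t}. (1 - ln s) powr (- \<alpha> / p) *
                 (LINT x:{s..phi p q \<alpha> t}|lborel. rearr \<Omega> f x powr p) powr (1 / p))
              + t * (LINT x:{phi p q \<alpha> t..1}|lborel. rearr \<Omega> f x powr q) powr (1 / q)
      in Kfun \<Omega> p \<alpha> q f t \<le> c * R \<and> R \<le> c * Kfun \<Omega> p \<alpha> q f t)"
proof -
  interpret unit_domain \<Omega> using assms(2,3) by unfold_locales simp_all
  have pq: "0 < p" "p < q" "1 \<le> q" "0 \<le> \<alpha>" "0 < 1/p - 1/q" "0 < \<alpha>/p"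
    using assms(4-6) by (auto simp: frac_less2)
  obtain c where "0 < c" and equiv: "\<forall>f\<in>GL_plus_Lq \<Omega> p \<alpha> q. \<forall>v\<in>{0<..<1}.
      Kfun \<Omega> p \<alpha> q f (psi p q \<alpha> v) \<le> c * holmstedt \<Omega> p \<alpha> q f v
      \<and> holmstedt \<Omega> p \<alpha> q f v \<le> c * Kfun \<Omega> p \<alpha> q f (psi p q \<alpha> v)"
    using K_functional_equivalence[OF pq(1-4)] by blast
  have "phi p q \<alpha> t \<in> {0<..<1}" "psi p q \<alpha> (phi p q \<alpha> t) = t" if "t \<in> {0<..<1}" for t
    using phi_psi[OF pq(5,6)] that by auto
  with \<open>0 < c\<close> equiv show ?thesis
    unfolding holmstedt_def gl_fun_upto_def Lq_tail_def Let_def by (intro exI[of _ c]) fastforce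
qed

end
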